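(* Let $\Omega$ be the stationary batch sojourn time, whose Laplace transform is $\mathbb{E}(e^{-s\Omega})=\sum_{n\ge0}\sum_{b\ge1}e^*_{n,b}(s)\mathbb{P}(N=n)\mathbb{P}(B=b)$ with $B$ the geometric batch size and $N$ independent of $B$ with $\mathbb{P}(N=0)=1-\frac{\rho}{1-q}$, $\mathbb{P}(N=n)=\left(1-\frac{\rho}{1-q}\right)\rho(\rho+q)^{n-1}$ ($n\ge1$). Then $$\mathbb{E}(\Omega)=\frac{1-\rho-q}{q(q+\rho)}\left(\frac{(1-q)^2(\rho+q)}{\rho+q-q^2}E^{(1)}(q)+\frac{q^3}{(1-q)(\rho+q-q^2)}-\omega\right),$$ where $$\omega=\rho^2\left(\frac{q}{(1-q-\rho)^2}\left(\frac{\rho}{\rho+q}\right)^{\frac{1-q-2\rho}{\rho}}\Omega_1(q)+\Omega_2(q)\right).$$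
   Context: Queueing model: an $M^{[X]}/M/1$ processor-sharing queue. Batches arrive according to a Poisson process with rate $\rho>0$; each job requires an exponential service with mean $1$; the unit server capacity is shared equally among all jobs present; all interarrival times, batch sizes and service requirements are independent. Batch sizes are geometric: $\mathbb{P}(B=b)=(1-q)q^{b-1}$, $b\ge1$, with $q\in(0,1)$ and $\rho+q<1$. For $n\ge0,b\ge1$, $\Omega_{n,b}$ is the sojourn time of a tagged batch (from its arrival to the departure of its last job) given $n$ jobs present at its arrival and batch size $b$, and $e^*_{n,b}(s)=\mathbb{E}(e^{-s\Omega_{n,b}})$. Define $E^{(1)}(v)=-\sum_{n\ge0}\sum_{b\ge1}\mathbb{E}(\Omega_{n,b})\,q^n v^b$ (so that $\sum_{n,b}e^*_{n,b}(s)q^nv^b=\frac{v}{(1-q)(1-v)}+sE^{(1)}(v)+o(s)$ as $s\to0$). Define, for $0<v<\rho+q$, $$\Omega_1(v)=\frac{v}{1-q+\rho}F_1\left(\tfrac{1-q+\rho}{\rho},\tfrac{1-q-\rho}{\rho},2,\tfrac{1-q+2\rho}{\rho};\tfrac{v}{q+\rho},v\right)-\frac{(1-v)^{\frac{q-1}{\rho}}}{(1-q)(q+\rho)}\,{}_2F_1\left(\tfrac{1-q}{\rho},\tfrac{1-q-\rho}{\rho},\tfrac{1-q+\rho}{\rho};\tfrac{v(1-q-\rho)}{(1-v)(q+\rho)}\right),$$ $$\Omega_2(v)=\frac{(1-q)(\rho+q)}{\rho^2}v^{\frac{\rho+q-1}{\rho}}(\rho+q-v)^{-\frac{2\rho+q-1}{\rho}}\int_0^v(1-\xi)\,\xi^{\frac{1-2\rho-q}{\rho}}(\rho+q-\xi)^{-\frac{1-q}{\rho}}E^{(1)}(\xi)\,d\xi,$$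 where ${}_2F_1(a,b,c;z)$ is the Gauss hypergeometric function and $F_1(\alpha,\beta,\beta',\gamma;x,y)=\sum_{m,n\ge0}\frac{(\alpha)_{m+n}(\beta)_m(\beta')_n}{(\gamma)_{m+n}m!\,n!}x^my^n$ is the Appell function of the first kind ($(a)_k$ the Pochhammer symbol). *)

theory Defs
  imports "HOL-Analysis.Analysis"
begin

definition hyp2F1 :: "real \<Rightarrow> real \<Rightarrow> real \<Rightarrow> real \<Rightarrow> real" where
  "hyp2F1 a b c z =
     (\<Sum>k. pochhammer a k * pochhammer b k / (pochhammer c k * fact k) * z ^ k)"

definition appellF1 :: "real \<Rightarrow> real \<Rightarrow> real \<Rightarrow> real \<Rightarrow> real \<Rightarrow> real \<Rightarrow> real" where
  "appellF1 \<alpha> \<beta> \<beta>' \<gamma> x y =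
     (\<Sum>\<^sub>\<infinity>(m, n)\<in>UNIV.
        pochhammer \<alpha> (m + n) * pochhammer \<beta> m * pochhammer \<beta>' n
          / (pochhammer \<gamma> (m + n) * fact m * fact n) * x ^ m * y ^ n)"

text \<open>State (n,b): n = number of jobs not belonging to the tagged batch, b = number of
  remaining jobs of the tagged batch.  Total event rate is rho + 1: batch arrivals at rate rho
  with geometric size k (prob (1-q) q^(k-1)), and service completions at total rate 1, which
  hit a non-tagged job w.p. n/(n+b) and a tagged job w.p. b/(n+b).  The sojourn time of the
  tagged batch is the hitting time of b = 0; its mean is the minimal nonnegative solution
  (least fixed point, in ennreal) of the first-step equations.\<close>
definition sojourn_step ::
  "real \<Rightarrow> real \<Rightarrow> (nat \<Rightarrow> nat \<Rightarrow> ennreal) \<Rightarrow> nat \<Rightarrow> nat \<Rightarrow> ennreal" where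
  "sojourn_step \<rho> q h n b =
     (if b = 0 then 0 else
        ennreal (1 / (1 + \<rho>))
      + (\<Sum>k. ennreal (\<rho> / (1 + \<rho>) * ((1 - q) * q ^ k)) * h (n + Suc k) b)
      + ennreal (1 / (1 + \<rho>) * (real n / real (n + b))) * h (n - 1) b
      + ennreal (1 / (1 + \<rho>) * (real b / real (n + b))) * h n (b - 1))"

definition mean_sojourn_nb :: "real \<Rightarrow> real \<Rightarrow> nat \<Rightarrow> nat \<Rightarrow> real" where
  "mean_sojourn_nb \<rho> q n b = enn2real (lfp (sojourn_step \<rho> q) n b)"

definition E1 :: "real \<Rightarrow> real \<Rightarrow> real \<Rightarrow> real" where
  "E1 \<rho> q v = - (\<Sum>\<^sub>\<infinity>(n, b)\<in>UNIV \<times> {1..}. mean_sojourn_nb \<rho> q n b * q ^ n * v ^ b)"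

definition prob_B :: "real \<Rightarrow> nat \<Rightarrow> real" where
  "prob_B q b = (1 - q) * q ^ (b - 1)"

definition prob_N :: "real \<Rightarrow> real \<Rightarrow> nat \<Rightarrow> real" where
  "prob_N \<rho> q n = (if n = 0 then 1 - \<rho> / (1 - q)
                    else (1 - \<rho> / (1 - q)) * \<rho> * (\<rho> + q) ^ (n - 1))"

definition mean_sojourn :: "real \<Rightarrow> real \<Rightarrow> real" where
  "mean_sojourn \<rho> q =
     (\<Sum>\<^sub>\<infinity>(n, b)\<in>UNIV \<times> {1..}. mean_sojourn_nb \<rho> q n b * prob_N \<rho> q n * prob_B q b)"

definition Omega1 :: "real \<Rightarrow> real \<Rightarrow> real \<Rightarrow> real" where
  "Omega1 \<rho> q v =
     v / (1 - q + \<rho>) *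
       appellF1 ((1 - q + \<rho>) / \<rho>) ((1 - q - \<rho>) / \<rho>) 2 ((1 - q + 2 * \<rho>) / \<rho>)
                (v / (q + \<rho>)) v
   - (1 - v) powr ((q - 1) / \<rho>) / ((1 - q) * (q + \<rho>)) *
       hyp2F1 ((1 - q) / \<rho>) ((1 - q - \<rho>) / \<rho>) ((1 - q + \<rho>) / \<rho>)
              (v * (1 - q - \<rho>) / ((1 - v) * (q + \<rho>)))"

definition Omega2 :: "real \<Rightarrow> real \<Rightarrow> real \<Rightarrow> real" where
  "Omega2 \<rho> q v =
     (1 - q) * (\<rho> + q) / \<rho>^2 * v powr ((\<rho> + q - 1) / \<rho>)
       * (\<rho> + q - v) powr (- (2 * \<rho> + q - 1) / \<rho>)
       * integral {0..v} (\<lambda>\<xi>. (1 - \<xi>) * \<xi> powr ((1 - 2 * \<rho> - q) / \<rho>)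
                              * (\<rho> + q - \<xi>) powr (- (1 - q) / \<rho>) * E1 \<rho> q \<xi>)"

definition omega :: "real \<Rightarrow> real \<Rightarrow> real" where
  "omega \<rho> q =
     \<rho>^2 * (q / (1 - q - \<rho>)^2 * (\<rho> / (\<rho> + q)) powr ((1 - q - 2 * \<rho>) / \<rho>) * Omega1 \<rho> q q
            + Omega2 \<rho> q q)"

end

theory Submission
  imports Defs
begin

(* Let T n b be the mean sojourn time from state (n, b).  First-step analysis gives linear
   equations for T whose least solution is finite, since \<kappa> (n + b), the mean busy period of
   n + b jobs, solves them.  Multiplying the equation at (n, b) by (n + b) x ^ n and summing over n,
   the n-weighted series cancel at x = u = \<rho> + q; this leaves a recurrence in b, i.e. a linear
   first-order differential equation for K v = \<Sum>b. \<Sum>n. T n b u ^ n v ^ b whose inhomogeneity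
   involves G v = - E1 \<rho> q v.  With c = (1 - q - \<rho>) / \<rho>, the integrating factor
   v powr (c - 1) / (u - v) powr c turns it into an integral of E1 (giving Omega_2), while the
   explicit source terms integrate to the hypergeometric and Appell functions of Omega_1.
   Averaging over the stationary N, which is geometric with ratio u apart from its atom at 0, and
   over B expresses E(Omega) through K q and Z = \<Sum>b. T 0 b q ^ b, and Z follows from the
   recurrence for T 0 b. *)

lemma powr_minus_add1:
  fixes x a :: real
  assumes "0 < x"
  shows "x powr (- (a + 1)) = 1 / (x powr a * x)"
proof -
  have "x powr (- (a + 1)) = inverse (x powr (a + 1))" by (rule powr_minus)
  also have "x powr (a + 1) = x powr a * x powr 1" by (rule powr_add)
  finally show ?thesis using assms by (simp add: divide_inverse)
qed

lemma sums_linear_times_power: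
  fixes x a b :: real
  assumes "\<bar>x\<bar> < 1"
  shows "(\<lambda>k. (a + b * real k) * x ^ k) sums (a / (1 - x) + b * x / (1 - x)^2)"
proof -
  have "(\<lambda>k. (a - b) * x ^ k + b * (real (Suc k) * x ^ k)) sums
          ((a - b) * (1 / (1 - x)) + b * (1 / (1 - x)^2))"
    using assms by (intro sums_add sums_mult geometric_sums geometric_deriv_sums) auto
  moreover have "(a - b) * (1 / (1 - x)) + b * (1 / (1 - x)^2) = a / (1 - x) + b * x / (1 - x)^2"
    using assms by (simp add: divide_simps) (simp add: algebra_simps power2_eq_square)
  ultimately show ?thesis by (simp add: algebra_simps)
qed

lemma summable_quadratic_times_power:
  fixes x :: real
  assumes "0 \<le> x" "x < 1"
  shows "summable (\<lambda>n. (real n + 1)^2 * x ^ n)"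
proof -
  have "summable (\<lambda>n. real (Suc n) * y ^ n)" if "norm y < 1" for y :: real
    using geometric_deriv_sums[OF that] by (rule sums_summable)
  then have "summable (\<lambda>n. diffs (\<lambda>n. real (Suc n)) n * x ^ n)"
    by (intro termdiff_converges[of x 1]) (use assms in auto)
  then have "summable (\<lambda>n. (real n + 1) * (real n + 2) * x ^ n)"
    by (simp add: diffs_def algebra_simps)
  then show ?thesis
    by (rule summable_comparison_test'[where N=0])
       (use assms in \<open>auto simp: power2_eq_square intro!: mult_right_mono\<close>)
qed

lemma summable_powser_linear_bound:
  fixes f :: "nat \<Rightarrow> real"
  assumes nonneg: "\<And>n. 0 \<le> f n" and bound: "\<And>n. f n \<le> C * (real n + 1)" and "0 \<le> x" "x < 1"
  shows "summable (\<lambda>n. f n * x ^ n)" and "summable (\<lambda>n. (real n * f n) * x ^ n)"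
proof -
  have C: "0 \<le> C" using nonneg[of 0] bound[of 0] by simp
  have dominant: "summable (\<lambda>n. C * ((real n + 1)^2 * x ^ n))"
    by (intro summable_mult summable_quadratic_times_power assms)
  have "C * (real n + 1) \<le> C * (real n + 1)^2" "real n * (C * (real n + 1)) \<le> C * (real n + 1)^2" for n
    using C by (auto simp: power2_eq_square algebra_simps intro!: mult_left_mono)
  then have "f n \<le> C * (real n + 1)^2" "real n * f n \<le> C * (real n + 1)^2" for n
    using bound[of n] mult_left_mono[OF bound[of n], of "real n"] by (meson of_nat_0_le_iff order_trans)+
  then have "norm (f n * x ^ n) \<le> C * ((real n + 1)^2 * x ^ n)"
    "norm ((real n * f n) * x ^ n) \<le> C * ((real n + 1)^2 * x ^ n)" for n
    using nonneg[of n] \<open>0 \<le> x\<close> by (simp_all add: abs_mult mult_right_mono mult.assoc[symmetric])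
  then show "summable (\<lambda>n. f n * x ^ n)" "summable (\<lambda>n. (real n * f n) * x ^ n)"
    by (blast intro: summable_comparison_test'[where N=0, OF dominant])+
qed

lemma powser_weighted_shift_down:
  fixes f :: "nat \<Rightarrow> real"
  assumes "summable (\<lambda>n. f n * x ^ n)" "summable (\<lambda>n. (real n * f n) * x ^ n)"
  shows "summable (\<lambda>n. (real n * f (Suc n)) * x ^ n)"
    and "x * (\<Sum>n. (real n * f (Suc n)) * x ^ n)
           = (\<Sum>n. (real n * f n) * x ^ n) - (\<Sum>n. f n * x ^ n) + f 0"
proof -
  let ?h = "\<lambda>m. (real m - 1) * f m"
  have sh: "summable (\<lambda>m. ?h m * x ^ m)"
    using summable_diff[OF assms(2,1)] by (simp add: algebra_simps)
  then show "summable (\<lambda>n. (real n * f (Suc n)) * x ^ n)"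
    using powser_split_head(3)[OF sh] by simp
  have "(\<Sum>m. ?h m * x ^ m) = (\<Sum>n. (real n * f n) * x ^ n) - (\<Sum>n. f n * x ^ n)"
    using suminf_diff[OF assms(2,1)] by (simp add: algebra_simps)
  then show "x * (\<Sum>n. (real n * f (Suc n)) * x ^ n)
               = (\<Sum>n. (real n * f n) * x ^ n) - (\<Sum>n. f n * x ^ n) + f 0"
    using powser_split_head(2)[OF sh] by (simp add: mult.commute)
qed

lemma powser_weighted_shift_up:
  fixes f :: "nat \<Rightarrow> real"
  assumes "summable (\<lambda>n. f n * x ^ n)" "summable (\<lambda>n. (real n * f n) * x ^ n)"
  shows "(\<lambda>n. (real n * f (n - 1)) * x ^ n) sums
           (x * ((\<Sum>n. (real n * f n) * x ^ n) + (\<Sum>n. f n * x ^ n)))"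
proof -
  have "(\<lambda>n. x * ((real n * f n) * x ^ n + f n * x ^ n)) sums
          (x * ((\<Sum>n. (real n * f n) * x ^ n) + (\<Sum>n. f n * x ^ n)))"
    by (intro sums_mult sums_add summable_sums assms)
  moreover have "(\<lambda>n. x * ((real n * f n) * x ^ n + f n * x ^ n))
                   = (\<lambda>n. (real (Suc n) * f (Suc n - 1)) * x ^ Suc n)"
    by (simp add: algebra_simps)
  ultimately show ?thesis
    using sums_Suc_iff[of "\<lambda>n. (real n * f (n - 1)) * x ^ n"] by simp
qed

lemma powser_has_real_derivative_weighted:
  fixes f :: "nat \<Rightarrow> real"
  assumes "summable (\<lambda>n. f n * R ^ n)" "0 < v" "v < R"
  shows "((\<lambda>x. \<Sum>n. f n * x ^ n) has_real_derivative (\<Sum>n. (real n * f n) * v ^ n) / v) (at v)"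
    and "summable (\<lambda>n. (real n * f n) * v ^ n)"
proof -
  have "summable (\<lambda>n. diffs f n * v ^ n)"
    using termdiff_converges[of v R f] assms powser_inside[OF assms(1)] by auto
  then show weighted: "summable (\<lambda>n. (real n * f n) * v ^ n)"
    using summable_powser_split_head[of "\<lambda>n. real n * f n" v] by (simp add: diffs_def)
  have "v * (\<Sum>n. diffs f n * v ^ n) = (\<Sum>n. (real n * f n) * v ^ n)"
    using powser_split_head(2)[OF weighted] by (simp add: diffs_def mult.commute)
  then have "(\<Sum>n. diffs f n * v ^ n) = (\<Sum>n. (real n * f n) * v ^ n) / v"
    using assms(2) by (simp add: field_simps)
  moreover have "((\<lambda>x. \<Sum>n. f n * x ^ n) has_real_derivative (\<Sum>n. diffs f n * v ^ n)) (at v)"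
    by (rule termdiffs_strong[OF assms(1)]) (use assms in auto)
  ultimately show "((\<lambda>x. \<Sum>n. f n * x ^ n) has_real_derivative (\<Sum>n. (real n * f n) * v ^ n) / v) (at v)"
    by simp
qed

lemma infsum_nonneg_eq_iterated_suminf:
  fixes f :: "nat \<Rightarrow> nat \<Rightarrow> real"
  assumes nonneg: "\<And>n b. 0 \<le> f n b" and f0: "\<And>n. f n 0 = 0"
    and inner: "\<And>b. summable (\<lambda>n. f n b)" and outer: "summable (\<lambda>b. \<Sum>n. f n b)"
  shows "(\<Sum>\<^sub>\<infinity>(n, b)\<in>UNIV \<times> {1..}. f n b) = (\<Sum>b. \<Sum>n. f n b)"
proof -
  have hs: "((\<lambda>n. f n b) has_sum (\<Sum>n. f n b)) UNIV" for b
    by (rule norm_summable_imp_has_sum) (use nonneg inner in \<open>auto intro: summable_sums\<close>)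
  have outer_nonneg: "0 \<le> (\<Sum>n. f n b)" for b
    using nonneg inner by (intro suminf_nonneg) auto
  have "(\<lambda>b. \<Sum>n. f n b) summable_on UNIV"
    by (rule summable_nonneg_imp_summable_on[OF outer outer_nonneg])
  then have "(\<lambda>b. \<Sum>n. f n b) summable_on {1..}"
    by (rule summable_on_subset) auto
  then have sig: "(\<lambda>(b, n). f n b) summable_on Sigma {1..} (\<lambda>_. UNIV)"
    by (intro summable_on_SigmaI[where g = "\<lambda>b. \<Sum>n. f n b"]) (use hs nonneg in auto)
  have bij: "bij_betw prod.swap ({1..} \<times> (UNIV :: nat set)) (UNIV \<times> {1..})"
    by (auto simp: bij_betw_def image_iff)
  have "(\<Sum>\<^sub>\<infinity>(n, b)\<in>UNIV \<times> {1..}. f n b)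
          = (\<Sum>\<^sub>\<infinity>x\<in>{1..} \<times> UNIV. (\<lambda>(n, b). f n b) (prod.swap x))"
    by (rule infsum_reindex_bij_betw[OF bij, symmetric])
  also have "\<dots> = (\<Sum>\<^sub>\<infinity>(b, n)\<in>Sigma {1..} (\<lambda>_. UNIV). f n b)"
    by (rule infsum_cong) auto
  also have "\<dots> = (\<Sum>\<^sub>\<infinity>b\<in>{1..}. \<Sum>\<^sub>\<infinity>n\<in>UNIV. f n b)"
    using infsum_Sigma'_banach[of "\<lambda>b n. f n b", OF sig] by simp
  also have "\<dots> = (\<Sum>\<^sub>\<infinity>b\<in>{1..}. \<Sum>n. f n b)"
    by (rule infsum_cong) (use hs in \<open>auto simp: has_sum_iff\<close>)
  also have "\<dots> = (\<Sum>\<^sub>\<infinity>b\<in>UNIV. \<Sum>n. f n b)"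
    by (rule infsum_cong_neutral) (auto simp: f0 not_less_eq_eq)
  also have "\<dots> = (\<Sum>b. \<Sum>n. f n b)"
    using norm_summable_imp_has_sum[of "\<lambda>b. \<Sum>n. f n b"] outer outer_nonneg
    by (simp add: has_sum_iff summable_sums)
  finally show ?thesis .
qed

lemma infsum_nonneg_by_diagonals:
  fixes t :: "nat \<times> nat \<Rightarrow> real"
  assumes nonneg: "\<And>x. 0 \<le> t x" and diag: "summable (\<lambda>N. \<Sum>m\<le>N. t (m, N - m))"
  shows "infsum t UNIV = (\<Sum>N. \<Sum>m\<le>N. t (m, N - m))"
proof -
  let ?g = "\<lambda>(N, m). (m, N - m)"
  have bij: "bij_betw ?g (Sigma UNIV (\<lambda>N. {..N})) (UNIV :: (nat \<times> nat) set)"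
  proof (rule bij_betw_byWitness[where f' = "\<lambda>(m, n). (m + n, m)"])
  qed auto
  have diag_hs: "((\<lambda>N. \<Sum>m\<le>N. t (m, N - m)) has_sum (\<Sum>N. \<Sum>m\<le>N. t (m, N - m))) UNIV"
    using norm_summable_imp_has_sum[OF _ summable_sums[OF diag]] nonneg diag
    by (simp add: sum_nonneg)
  have sig: "(\<lambda>(N, m). t (?g (N, m))) summable_on Sigma UNIV (\<lambda>N. {..N})"
  proof (rule summable_on_SigmaI[where g = "\<lambda>N. \<Sum>m\<le>N. t (m, N - m)"])
    show "((\<lambda>m. (\<lambda>(N, m). t (?g (N, m))) (N, m)) has_sum (\<Sum>m\<le>N. t (m, N - m))) {..N}" for N
      using has_sum_finite[of "{..N}" "\<lambda>m. t (m, N - m)"] by simp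
    show "(\<lambda>N. \<Sum>m\<le>N. t (m, N - m)) summable_on UNIV"
      using diag_hs by (simp add: has_sum_iff)
  qed (use nonneg in auto)
  have "infsum t UNIV = (\<Sum>\<^sub>\<infinity>x\<in>Sigma UNIV (\<lambda>N. {..N}). t (?g x))"
    by (rule infsum_reindex_bij_betw[OF bij, symmetric])
  also have "\<dots> = (\<Sum>\<^sub>\<infinity>(N, m)\<in>Sigma UNIV (\<lambda>N. {..N}). t (?g (N, m)))"
    by (rule infsum_cong) auto
  also have "\<dots> = (\<Sum>\<^sub>\<infinity>N\<in>UNIV. \<Sum>\<^sub>\<infinity>m\<in>{..N}. t (?g (N, m)))"
    using infsum_Sigma'_banach[of "\<lambda>N m. t (?g (N, m))", OF sig] by simp
  also have "\<dots> = (\<Sum>\<^sub>\<infinity>N\<in>UNIV. \<Sum>m\<le>N. t (m, N - m))"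
    by (rule infsum_cong) (simp add: infsum_finite)
  also have "\<dots> = (\<Sum>N. \<Sum>m\<le>N. t (m, N - m))"
    using diag_hs by (simp add: has_sum_iff)
  finally show ?thesis .
qed

section \<open>Hypergeometric and Appell series\<close>

lemma pochhammer_div_pochhammer_plus1:
  fixes a :: real
  assumes "a > 0"
  shows "pochhammer a k / pochhammer (a + 1) k = a / (a + real k)"
proof -
  have "a * pochhammer (a + 1) k = (a + real k) * pochhammer a k"
    using pochhammer_rec[of a k] pochhammer_rec'[of a k] by simp
  moreover have "pochhammer (a + 1) k > 0" "a + real k > 0"
    using assms by (auto intro: pochhammer_pos)
  ultimately show ?thesis by (simp add: field_simps)
qed

lemma sums_pochhammer_binomial:
  fixes x b :: real
  assumes "\<bar>x\<bar> < 1"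
  shows "(\<lambda>k. pochhammer b k / fact k * x ^ k) sums ((1 - x) powr (- b))"
proof -
  have "((- b) gchoose k) * (- x) ^ k = pochhammer b k / fact k * x ^ k" for k
  proof -
    have "((- b) gchoose k) * (- x) ^ k = ((-1) ^ k * (-1) ^ k) * (pochhammer b k / fact k * x ^ k)"
      by (simp add: gbinomial_pochhammer power_minus[of x k] algebra_simps)
    also have "(-1::real) ^ k * (-1) ^ k = 1" by (simp add: power_mult_distrib[symmetric])
    finally show ?thesis by simp
  qed
  then show ?thesis
    using gen_binomial_real[of "- x" "- b"] assms by simp
qed

lemma summable_pochhammer_binomial:
  fixes y b :: real
  assumes "b > 0" "0 \<le> y" "y < 1"
  shows "summable (\<lambda>k. \<bar>pochhammer b k / fact k\<bar> * y ^ k)"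
  using sums_summable[OF sums_pochhammer_binomial[of y b]] pochhammer_nonneg[OF assms(1)] assms
  by simp

lemma summable_averaged_powser:
  fixes d :: "nat \<Rightarrow> real"
  assumes "a > 0" "summable (\<lambda>N. \<bar>d N\<bar> * y ^ N)" "0 \<le> y"
  shows "summable (\<lambda>N. a / (a + real N) * d N * y ^ N)"
proof (rule summable_comparison_test'[where N=0])
  show "summable (\<lambda>N. \<bar>d N\<bar> * y ^ N)" by (rule assms(2))
  fix N
  have "\<bar>a / (a + real N)\<bar> \<le> 1" using assms(1) by (simp add: abs_of_pos)
  then have "\<bar>a / (a + real N)\<bar> * (\<bar>d N\<bar> * y ^ N) \<le> \<bar>d N\<bar> * y ^ N"
    using assms(3) by (intro mult_left_le_one_le) auto
  then show "norm (a / (a + real N) * d N * y ^ N) \<le> \<bar>d N\<bar> * y ^ N"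
    using assms(3) by (simp add: abs_mult mult.assoc)
qed

text \<open>With lower parameter \<open>\<alpha> + 1\<close>, the series of \<open>hyp2F1\<close> and \<open>appellF1\<close> are averaged
  power series \<open>\<Sum> \<alpha> / (\<alpha> + N) * d N * x ^ N\<close>; multiplying by \<open>x powr \<alpha>\<close> turns them into
  antiderivatives of \<open>\<alpha> * x powr (\<alpha> - 1) * (\<Sum> d N * x ^ N)\<close>.\<close>

lemma DERIV_powr_times_averaged_powser:
  fixes d :: "nat \<Rightarrow> real"
  assumes a: "a > 0" and v: "0 < v" "v < r"
    and abs_summable: "\<And>y. 0 \<le> y \<Longrightarrow> y < r \<Longrightarrow> summable (\<lambda>N. \<bar>d N\<bar> * y ^ N)"
    and sums_D: "(\<lambda>N. d N * v ^ N) sums D"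
  shows "((\<lambda>x. x powr a * (\<Sum>N. a / (a + real N) * d N * x ^ N)) has_real_derivative
           a * v powr (a - 1) * D) (at v)"
proof -
  define e where "e N = a / (a + real N) * d N" for N
  define R where "R = (v + r) / 2"
  have R: "v < R" "R < r" using v unfolding R_def by auto
  have se: "summable (\<lambda>N. e N * R ^ N)"
    unfolding e_def using summable_averaged_powser[OF a abs_summable[of R]] R v by simp
  note P' = powser_has_real_derivative_weighted[OF se v(1) R(1)]
  have sev: "summable (\<lambda>N. e N * v ^ N)" using powser_inside[OF se, of v] v R by auto
  have "a * (\<Sum>N. e N * v ^ N) + (\<Sum>N. (real N * e N) * v ^ N) = (\<Sum>N. a * (d N * v ^ N))"
  proof -
    have "(\<lambda>N. a * (e N * v ^ N) + (real N * e N) * v ^ N) sums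
            (a * (\<Sum>N. e N * v ^ N) + (\<Sum>N. (real N * e N) * v ^ N))"
      by (intro sums_add sums_mult summable_sums sev P'(2))
    moreover have "a * (e N * v ^ N) + (real N * e N) * v ^ N = a * (d N * v ^ N)" for N
    proof -
      have "a * (e N * v ^ N) + (real N * e N) * v ^ N
              = ((a + real N) * (a / (a + real N))) * (d N * v ^ N)"
        unfolding e_def by (simp add: algebra_simps add_divide_distrib)
      also have "(a + real N) * (a / (a + real N)) = a" using a by simp
      finally show ?thesis .
    qed
    ultimately show ?thesis by (simp add: sums_iff)
  qed
  also have "\<dots> = a * D" using sums_D by (simp add: suminf_mult sums_iff)
  finally have weighted_sum: "a * (\<Sum>N. e N * v ^ N) + (\<Sum>N. (real N * e N) * v ^ N) = a * D" .
  have "v powr a = v powr (a - 1) * v" using v by (simp add: powr_diff)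
  then have "a * v powr (a - 1) * (\<Sum>N. e N * v ^ N) + v powr a * ((\<Sum>N. (real N * e N) * v ^ N) / v)
               = v powr (a - 1) * (a * (\<Sum>N. e N * v ^ N) + (\<Sum>N. (real N * e N) * v ^ N))"
    using v by (simp add: algebra_simps)
  also have "\<dots> = a * v powr (a - 1) * D" unfolding weighted_sum by simp
  finally have "a * v powr (a - 1) * (\<Sum>N. e N * v ^ N) + v powr a * ((\<Sum>N. (real N * e N) * v ^ N) / v)
                  = a * v powr (a - 1) * D" .
  then show ?thesis
    using DERIV_mult[OF has_real_derivative_powr[OF v(1), of a] P'(1)] unfolding e_def
    by (simp add: algebra_simps)
qed

lemma hyp2F1_plus1_eq_averaged_powser:
  fixes a b z :: real
  assumes "a > 0"
  shows "hyp2F1 a b (a + 1) z = (\<Sum>k. a / (a + real k) * (pochhammer b k / fact k) * z ^ k)"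
  unfolding hyp2F1_def
proof (rule suminf_cong)
  fix k
  have "pochhammer a k * pochhammer b k / (pochhammer (a + 1) k * fact k) * z ^ k
      = (pochhammer a k / pochhammer (a + 1) k) * (pochhammer b k / fact k) * z ^ k"
    by simp
  then show "pochhammer a k * pochhammer b k / (pochhammer (a + 1) k * fact k) * z ^ k
      = a / (a + real k) * (pochhammer b k / fact k) * z ^ k"
    using pochhammer_div_pochhammer_plus1[OF assms] by simp
qed

lemma DERIV_powr_times_hyp2F1:
  fixes a b z :: real
  assumes "a > 0" "b > 0" "0 < z" "z < 1"
  shows "((\<lambda>x. x powr a * hyp2F1 a b (a + 1) x) has_real_derivative
           a * z powr (a - 1) * (1 - z) powr (- b)) (at z)"
  unfolding hyp2F1_plus1_eq_averaged_powser[OF assms(1)]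
  by (rule DERIV_powr_times_averaged_powser[OF assms(1,3,4) summable_pochhammer_binomial])
     (use assms sums_pochhammer_binomial in auto)

definition appell_coeff :: "real \<Rightarrow> real \<Rightarrow> nat \<Rightarrow> real" where
  "appell_coeff \<beta> w N =
     (\<Sum>m\<le>N. (pochhammer \<beta> m / fact m * w ^ m) * (pochhammer 2 (N - m) / fact (N - m)))"

lemma appell_coeff_nonneg: "\<beta> > 0 \<Longrightarrow> w \<ge> 0 \<Longrightarrow> appell_coeff \<beta> w N \<ge> 0"
  unfolding appell_coeff_def
  by (intro sum_nonneg mult_nonneg_nonneg divide_nonneg_pos pochhammer_nonneg) auto

lemma appell_coeff_sums:
  fixes \<beta> w v :: real
  assumes "\<beta> > 0" "w \<ge> 0" "0 \<le> v" "w * v < 1" "v < 1"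
  shows "(\<lambda>N. appell_coeff \<beta> w N * v ^ N) sums ((1 - w * v) powr (- \<beta>) * (1 - v) powr (- 2))"
proof -
  let ?a = "\<lambda>m. pochhammer \<beta> m / fact m * (w * v) ^ m"
  let ?b = "\<lambda>n. pochhammer 2 n / fact n * v ^ n"
  have sa: "?a sums ((1 - w * v) powr (- \<beta>))"
    by (rule sums_pochhammer_binomial) (use assms in auto)
  have sb: "?b sums ((1 - v) powr (- 2))"
    by (rule sums_pochhammer_binomial) (use assms in auto)
  have "norm (?a m) = ?a m" "norm (?b m) = ?b m" for m
    using pochhammer_nonneg[OF assms(1), of m] pochhammer_nonneg[of "2::real" m] assms by simp_all
  then have "(\<lambda>k. \<Sum>i\<le>k. ?a i * ?b (k - i)) sums (suminf ?a * suminf ?b)"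
    by (intro Cauchy_product_sums) (use sa sb in \<open>auto simp: sums_iff\<close>)
  moreover have "(\<Sum>i\<le>k. ?a i * ?b (k - i)) = appell_coeff \<beta> w k * v ^ k" for k
    unfolding appell_coeff_def sum_distrib_right
  proof (rule sum.cong)
    fix i assume "i \<in> {..k}"
    then have "v ^ i * v ^ (k - i) = v ^ k" by (simp add: power_add[symmetric])
    then show "?a i * ?b (k - i)
                 = pochhammer \<beta> i / fact i * w ^ i * (pochhammer 2 (k - i) / fact (k - i)) * v ^ k"
      by (simp add: power_mult_distrib algebra_simps)
  qed simp
  ultimately show ?thesis using sa sb by (simp add: sums_iff)
qed

lemma summable_appell_coeff:
  assumes "\<beta> > 0" "0 < u" "u < 1" "0 \<le> y" "y < u"
  shows "summable (\<lambda>N. \<bar>appell_coeff \<beta> (1 / u) N\<bar> * y ^ N)"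
proof -
  have "summable (\<lambda>N. appell_coeff \<beta> (1 / u) N * y ^ N)"
    by (rule sums_summable[OF appell_coeff_sums]) (use assms in \<open>auto simp: field_simps\<close>)
  then show ?thesis
    using appell_coeff_nonneg[OF assms(1), of "1 / u"] assms by simp
qed

text \<open>Summing the double series of \<open>appellF1\<close> along the diagonals \<open>m + n = N\<close>.\<close>

lemma appellF1_eq_averaged_powser:
  fixes \<alpha> \<beta> u v :: real
  assumes a: "\<alpha> > 0" "\<beta> > 0" and u: "0 < u" "u < 1" and v: "0 \<le> v" "v < u"
  shows "appellF1 \<alpha> \<beta> 2 (\<alpha> + 1) (v / u) v
           = (\<Sum>N. \<alpha> / (\<alpha> + real N) * appell_coeff \<beta> (1 / u) N * v ^ N)"
proof -
  define t where "t = (\<lambda>(m, n). pochhammer \<alpha> (m + n) * pochhammer \<beta> m * pochhammer 2 n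
          / (pochhammer (\<alpha> + 1) (m + n) * fact m * fact n) * (v / u) ^ m * v ^ n)"
  have t_eq: "t (m, n) = \<alpha> / (\<alpha> + real (m + n))
      * ((pochhammer \<beta> m / fact m * (1 / u) ^ m) * (pochhammer 2 n / fact n)) * v ^ (m + n)" for m n
  proof -
    have "t (m, n) = (pochhammer \<alpha> (m + n) / pochhammer (\<alpha> + 1) (m + n))
        * ((pochhammer \<beta> m / fact m * (1 / u) ^ m) * (pochhammer 2 n / fact n)) * v ^ (m + n)"
      unfolding t_def by (simp add: power_add power_divide field_simps)
    then show ?thesis using pochhammer_div_pochhammer_plus1[OF a(1), of "m + n"] by simp
  qed
  have t_nonneg: "t x \<ge> 0" for x
    using a u v pochhammer_nonneg[OF a(2)] pochhammer_nonneg[of 2]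
    by (cases x) (auto simp: t_eq intro!: mult_nonneg_nonneg divide_nonneg_pos)
  have diag: "(\<Sum>m\<le>N. t (m, N - m)) = \<alpha> / (\<alpha> + real N) * appell_coeff \<beta> (1 / u) N * v ^ N" for N
    unfolding appell_coeff_def sum_distrib_left sum_distrib_right
    by (rule sum.cong) (auto simp: t_eq algebra_simps)
  have "summable (\<lambda>N. \<Sum>m\<le>N. t (m, N - m))"
    unfolding diag by (intro summable_averaged_powser summable_appell_coeff) (use a u v in auto)
  then have "infsum t UNIV = (\<Sum>N. \<Sum>m\<le>N. t (m, N - m))"
    by (rule infsum_nonneg_by_diagonals[of t, OF t_nonneg])
  then show ?thesis
    unfolding appellF1_def diag by (simp add: t_def)
qed

lemma DERIV_powr_times_appellF1:
  fixes \<alpha> \<beta> u v :: real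
  assumes a: "\<alpha> > 0" "\<beta> > 0" and u: "0 < u" "u < 1" and v: "0 < v" "v < u"
  shows "((\<lambda>x. x powr \<alpha> * appellF1 \<alpha> \<beta> 2 (\<alpha> + 1) (x / u) x) has_real_derivative
           \<alpha> * v powr (\<alpha> - 1) * ((1 - v / u) powr (- \<beta>) * (1 - v) powr (- 2))) (at v)"
proof -
  have "((\<lambda>x. x powr \<alpha> * (\<Sum>N. \<alpha> / (\<alpha> + real N) * appell_coeff \<beta> (1 / u) N * x ^ N))
          has_real_derivative \<alpha> * v powr (\<alpha> - 1) * ((1 - 1 / u * v) powr (- \<beta>) * (1 - v) powr (- 2)))
          (at v)"
  proof (rule DERIV_powr_times_averaged_powser[OF a(1) v summable_appell_coeff[OF a(2) u]])
    show "(\<lambda>N. appell_coeff \<beta> (1 / u) N * v ^ N) sums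
            ((1 - 1 / u * v) powr (- \<beta>) * (1 - v) powr (- 2))"
      by (rule appell_coeff_sums) (use a u v in \<open>auto simp: field_simps\<close>)
  qed
  then have "((\<lambda>x. x powr \<alpha> * appellF1 \<alpha> \<beta> 2 (\<alpha> + 1) (x / u) x) has_real_derivative
               \<alpha> * v powr (\<alpha> - 1) * ((1 - 1 / u * v) powr (- \<beta>) * (1 - v) powr (- 2))) (at v)"
    by (rule has_field_derivative_transform_within_open[where S = "{0<..<u}"])
       (use v appellF1_eq_averaged_powser[OF a u] in auto)
  then show ?thesis by simp
qed

lemma isCont_averaged_powser:
  fixes d :: "nat \<Rightarrow> real"
  assumes "a > 0" "\<And>y. 0 \<le> y \<Longrightarrow> y < r \<Longrightarrow> summable (\<lambda>N. \<bar>d N\<bar> * y ^ N)" "0 \<le> x" "x < r"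
  shows "isCont (\<lambda>x. \<Sum>N. a / (a + real N) * d N * x ^ N) x"
proof (rule isCont_powser)
  show "summable (\<lambda>N. a / (a + real N) * d N * ((x + r) / 2) ^ N)"
    using assms by (intro summable_averaged_powser) auto
qed (use assms in auto)

lemma isCont_hyp2F1_plus1:
  fixes a b z :: real
  assumes "a > 0" "b > 0" "0 \<le> z" "z < 1"
  shows "isCont (hyp2F1 a b (a + 1)) z"
  unfolding hyp2F1_plus1_eq_averaged_powser[OF assms(1), abs_def]
  using isCont_averaged_powser[OF assms(1) summable_pochhammer_binomial[OF assms(2)] assms(3,4)] by simp

lemma continuous_on_appellF1:
  fixes \<alpha> \<beta> u r :: real
  assumes "\<alpha> > 0" "\<beta> > 0" "0 < u" "u < 1" "r < u"
  shows "continuous_on {0..r} (\<lambda>x. appellF1 \<alpha> \<beta> 2 (\<alpha> + 1) (x / u) x)"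
proof -
  have "continuous_on {0..r} (\<lambda>x. \<Sum>N. \<alpha> / (\<alpha> + real N) * appell_coeff \<beta> (1 / u) N * x ^ N)"
    using assms isCont_averaged_powser[OF assms(1) summable_appell_coeff[OF assms(2,3,4)]]
    by (intro continuous_at_imp_continuous_on) auto
  then show ?thesis
    by (rule continuous_on_cong[THEN iffD1, rotated 2])
       (use assms appellF1_eq_averaged_powser[OF assms(1-4)] in auto)
qed

section \<open>The first-step equations\<close>

lemma service_completion_linear:
  fixes n b :: nat and k :: real
  assumes "b \<noteq> 0"
  shows "real n / real (n + b) * (k * (real (n - 1) + real b))
           + real b / real (n + b) * (k * (real n + real (b - 1))) = k * (real n + real b - 1)"
proof -
  have "real n * real (n - 1) = real n * (real n - 1)" by (cases n) auto
  moreover have "real b * real (b - 1) = real b * (real b - 1)" using assms by (cases b) auto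
  ultimately have "real n * (real (n - 1) + real b) + real b * (real n + real (b - 1))
                     = (real n + real b) * (real n + real b - 1)"
    by (simp add: algebra_simps)
  then have d: "real n / real (n + b) * (real (n - 1) + real b) + real b / real (n + b) * (real n + real (b - 1))
                  = real n + real b - 1"
    using assms by (simp add: add_divide_distrib[symmetric])
  have "real n / real (n + b) * (k * (real (n - 1) + real b))
               + real b / real (n + b) * (k * (real n + real (b - 1)))
          = k * (real n / real (n + b) * (real (n - 1) + real b)
               + real b / real (n + b) * (real n + real (b - 1)))"
    by (simp only: mult.left_commute[of _ k] distrib_left)
  also have "\<dots> = k * (real n + real b - 1)" unfolding d ..
  finally show ?thesis .
qed

locale batch_ps_queue =
  fixes \<rho> q :: real
  assumes rho_pos: "0 < \<rho>" and q_pos: "0 < q" and q_lt1: "q < 1" and stable: "\<rho> + q < 1"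
begin

abbreviation T :: "nat \<Rightarrow> nat \<Rightarrow> real" where
  "T \<equiv> mean_sojourn_nb \<rho> q"

definition after_arrival :: "(nat \<Rightarrow> nat \<Rightarrow> real) \<Rightarrow> nat \<Rightarrow> nat \<Rightarrow> real" where
  "after_arrival h n b = (\<Sum>k. (1 - q) * q ^ k * h (n + Suc k) b)"

definition first_step :: "(nat \<Rightarrow> nat \<Rightarrow> real) \<Rightarrow> nat \<Rightarrow> nat \<Rightarrow> real" where
  "first_step h n b = (1 + \<rho> * after_arrival h n b + real n / real (n + b) * h (n - 1) b
                         + real b / real (n + b) * h n (b - 1)) / (1 + \<rho>)"

lemma sojourn_step_mono: "mono (sojourn_step \<rho> q)"
  unfolding mono_def le_fun_def sojourn_step_def
  by (auto intro!: add_mono mult_left_mono suminf_le)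

lemma after_arrival_nonneg:
  assumes "\<And>n b. 0 \<le> h n b" "summable (\<lambda>k. (1 - q) * q ^ k * h (n + Suc k) b)"
  shows "0 \<le> after_arrival h n b"
  unfolding after_arrival_def using assms q_pos q_lt1 by (intro suminf_nonneg) auto

lemma first_step_nonneg:
  assumes "\<And>n b. 0 \<le> h n b" "summable (\<lambda>k. (1 - q) * q ^ k * h (n + Suc k) b)"
  shows "0 \<le> first_step h n b"
  unfolding first_step_def using after_arrival_nonneg[of h, OF assms] assms(1) rho_pos by simp

lemma sojourn_step_ennreal:
  assumes nonneg: "\<And>n b. 0 \<le> h n b" and summable: "summable (\<lambda>k. (1 - q) * q ^ k * h (n + Suc k) b)"
    and "b \<noteq> 0"
  shows "sojourn_step \<rho> q (\<lambda>n b. ennreal (h n b)) n b = ennreal (first_step h n b)"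
proof -
  let ?w = "\<lambda>k. \<rho> / (1 + \<rho>) * ((1 - q) * q ^ k)"
  have w: "0 \<le> ?w k" for k using rho_pos q_pos q_lt1 by simp
  have A: "0 \<le> after_arrival h n b" by (rule after_arrival_nonneg[of h, OF nonneg summable])
  have "(\<Sum>k. ennreal (?w k) * ennreal (h (n + Suc k) b)) = (\<Sum>k. ennreal (?w k * h (n + Suc k) b))"
    by (rule suminf_cong) (use ennreal_mult[OF w nonneg] in simp)
  also have "\<dots> = ennreal (\<Sum>k. ?w k * h (n + Suc k) b)"
    using summable_mult[OF summable, of "\<rho> / (1 + \<rho>)"] mult_nonneg_nonneg[OF w nonneg]
    by (intro suminf_ennreal2) (auto simp: mult.assoc)
  also have "(\<Sum>k. ?w k * h (n + Suc k) b) = \<rho> / (1 + \<rho>) * after_arrival h n b"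
    unfolding after_arrival_def using suminf_mult[OF summable, of "\<rho> / (1 + \<rho>)"]
    by (simp add: mult.assoc)
  finally have arrivals: "(\<Sum>k. ennreal (?w k) * ennreal (h (n + Suc k) b))
                            = ennreal (\<rho> / (1 + \<rho>) * after_arrival h n b)" .
  have c1: "0 \<le> 1 / (1 + \<rho>) * (real n / real (n + b))" and c2: "0 \<le> 1 / (1 + \<rho>) * (real b / real (n + b))"
    using rho_pos by simp_all
  have "sojourn_step \<rho> q (\<lambda>n b. ennreal (h n b)) n b
      = ennreal (1 / (1 + \<rho>)) + ennreal (\<rho> / (1 + \<rho>) * after_arrival h n b)
        + ennreal (1 / (1 + \<rho>) * (real n / real (n + b)) * h (n - 1) b)
        + ennreal (1 / (1 + \<rho>) * (real b / real (n + b)) * h n (b - 1))"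
    using \<open>b \<noteq> 0\<close> arrivals ennreal_mult[OF c1 nonneg] ennreal_mult[OF c2 nonneg]
    by (simp add: sojourn_step_def)
  also have "\<dots> = ennreal (1 / (1 + \<rho>) + \<rho> / (1 + \<rho>) * after_arrival h n b
        + 1 / (1 + \<rho>) * (real n / real (n + b)) * h (n - 1) b
        + 1 / (1 + \<rho>) * (real b / real (n + b)) * h n (b - 1))"
    using rho_pos A mult_nonneg_nonneg[OF c1 nonneg] mult_nonneg_nonneg[OF c2 nonneg]
    by (simp add: ennreal_plus)
  also have "\<dots> = ennreal (first_step h n b)"
    by (simp add: first_step_def add_divide_distrib ac_simps)
  finally show ?thesis .
qed

definition \<kappa> :: real where
  "\<kappa> = (1 - q) / (1 - q - \<rho>)"

lemma kappa_pos: "0 < \<kappa>"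
  using stable q_lt1 by (simp add: \<kappa>_def)

lemma sums_geometric_batch:
  "(\<lambda>k. (1 - q) * q ^ k * (m + real k)) sums (m + q / (1 - q))"
proof -
  have "(\<lambda>k. (1 - q) * ((m + 1 * real k) * q ^ k)) sums ((1 - q) * (m / (1 - q) + 1 * q / (1 - q)^2))"
    using sums_linear_times_power[of q m 1] q_pos q_lt1 by (intro sums_mult) auto
  moreover have "(1 - q) * (m / (1 - q) + 1 * q / (1 - q)^2) = m + q / (1 - q)"
  proof -
    have "1 - q \<noteq> 0" using q_lt1 by simp
    then show ?thesis by (simp add: divide_simps) (simp add: algebra_simps power2_eq_square)
  qed
  ultimately show ?thesis by (simp add: algebra_simps)
qed

lemma kappa_balance: "\<rho> * \<kappa> * (1 + q / (1 - q)) = \<kappa> - 1"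
proof -
  have "1 - q \<noteq> 0" "1 - q - \<rho> \<noteq> 0" using stable q_lt1 by auto
  then have "\<rho> * \<kappa> * (1 + q / (1 - q)) = \<rho> / (1 - q - \<rho>)" "\<kappa> - 1 = \<rho> / (1 - q - \<rho>)"
    by (simp_all add: \<kappa>_def divide_simps)
  then show ?thesis by simp
qed

text \<open>\<open>\<kappa> * (n + b)\<close> is the mean busy period started by \<open>n + b\<close> jobs at load \<open>\<rho> / (1 - q)\<close>.
  It solves the first-step equations exactly, so it bounds their least solution.\<close>

lemma first_step_linear:
  assumes "b \<noteq> 0"
  shows "first_step (\<lambda>n b. \<kappa> * (real n + real b)) n b = \<kappa> * (real n + real b)"
proof -
  have "(\<lambda>k. \<kappa> * ((1 - q) * q ^ k * ((real n + 1 + real b) + real k))) sums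
          (\<kappa> * ((real n + 1 + real b) + q / (1 - q)))"
    by (intro sums_mult sums_geometric_batch)
  then have A: "after_arrival (\<lambda>n b. \<kappa> * (real n + real b)) n b
                  = \<kappa> * (real n + real b + 1 + q / (1 - q))"
    unfolding after_arrival_def by (simp add: sums_iff algebra_simps)
  have service: "real n / real (n + b) * (\<kappa> * (real (n - 1) + real b))
                   + real b / real (n + b) * (\<kappa> * (real n + real (b - 1))) = \<kappa> * (real n + real b - 1)"
    using service_completion_linear[OF assms] .
  have "1 + r * (k * (N + 1 + Q)) + k * (N - 1) = (1 + r) * (k * N)"
    if "r * k * (1 + Q) = k - 1" for r k N Q :: real
  proof -
    have "1 + r * (k * (N + 1 + Q)) + k * (N - 1) = (1 + r) * (k * N) + (1 + r * k * (1 + Q) - k)"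
      by (simp add: algebra_simps)
    then show ?thesis using that by simp
  qed
  then have "1 + \<rho> * (\<kappa> * (real n + real b + 1 + q / (1 - q))) + \<kappa> * (real n + real b - 1)
               = (1 + \<rho>) * (\<kappa> * (real n + real b))"
    using kappa_balance by blast
  moreover have "first_step (\<lambda>n b. \<kappa> * (real n + real b)) n b
      = (1 + \<rho> * after_arrival (\<lambda>n b. \<kappa> * (real n + real b)) n b
          + (real n / real (n + b) * (\<kappa> * (real (n - 1) + real b))
             + real b / real (n + b) * (\<kappa> * (real n + real (b - 1))))) / (1 + \<rho>)"
    unfolding first_step_def by (simp only: add.assoc)
  ultimately show ?thesis
    using rho_pos unfolding A service by simp
qed

lemma after_arrival_linear_bound:
  assumes "\<And>m. 0 \<le> h m b" "\<And>m. h m b \<le> \<kappa> * (real m + real b)"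
  shows "summable (\<lambda>k. (1 - q) * q ^ k * h (n + Suc k) b)"
    and "after_arrival h n b \<le> \<kappa> * (real n + real b + 1 + q / (1 - q))"
proof -
  have major: "(\<lambda>k. \<kappa> * ((1 - q) * q ^ k * ((real n + real b + 1) + real k))) sums
                 (\<kappa> * (real n + real b + 1 + q / (1 - q)))"
    by (intro sums_mult sums_geometric_batch)
  have le: "(1 - q) * q ^ k * h (n + Suc k) b \<le> \<kappa> * ((1 - q) * q ^ k * ((real n + real b + 1) + real k))"
    for k
    using mult_left_mono[OF assms(2)[of "n + Suc k"], of "(1 - q) * q ^ k"] q_pos q_lt1
    by (simp add: algebra_simps)
  show summable: "summable (\<lambda>k. (1 - q) * q ^ k * h (n + Suc k) b)"
    using assms(1) q_pos q_lt1 le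
    by (intro summable_comparison_test'[OF sums_summable[OF major], where N=0]) simp
  show "after_arrival h n b \<le> \<kappa> * (real n + real b + 1 + q / (1 - q))"
    unfolding after_arrival_def using suminf_le[OF le summable sums_summable[OF major]] major
    by (simp add: sums_iff)
qed

lemma lfp_sojourn_step_le_linear: "lfp (sojourn_step \<rho> q) n b \<le> ennreal (\<kappa> * (real n + real b))"
proof -
  have "sojourn_step \<rho> q (\<lambda>n b. ennreal (\<kappa> * (real n + real b))) n b \<le> ennreal (\<kappa> * (real n + real b))"
    for n b
  proof (cases "b = 0")
    case False
    have nonneg: "0 \<le> \<kappa> * (real n + real b)" for n b using kappa_pos by simp
    have "summable (\<lambda>k. (1 - q) * q ^ k * (\<kappa> * (real (n + Suc k) + real b)))"
      by (rule after_arrival_linear_bound(1)) (use nonneg in auto)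
    then have "sojourn_step \<rho> q (\<lambda>n b. ennreal (\<kappa> * (real n + real b))) n b
                 = ennreal (first_step (\<lambda>n b. \<kappa> * (real n + real b)) n b)"
      by (rule sojourn_step_ennreal[OF nonneg _ False])
    then show ?thesis using first_step_linear[OF False] by simp
  qed (simp add: sojourn_step_def)
  then have "lfp (sojourn_step \<rho> q) \<le> (\<lambda>n b. ennreal (\<kappa> * (real n + real b)))"
    by (intro lfp_lowerbound le_funI)
  then show ?thesis by (simp add: le_fun_def)
qed

lemma lfp_sojourn_step_eq: "lfp (sojourn_step \<rho> q) n b = ennreal (T n b)"
  using lfp_sojourn_step_le_linear[of n b]
  by (simp add: mean_sojourn_nb_def ennreal_enn2real_if top.not_eq_extremum le_less_trans)

lemma mean_sojourn_nb_nonneg: "0 \<le> T n b"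
  by (simp add: mean_sojourn_nb_def)

lemma mean_sojourn_nb_le: "T n b \<le> \<kappa> * (real n + real b)"
  using lfp_sojourn_step_le_linear[of n b] kappa_pos
  by (simp add: lfp_sojourn_step_eq ennreal_le_iff)

lemma lfp_sojourn_step_unfold: "lfp (sojourn_step \<rho> q) = sojourn_step \<rho> q (lfp (sojourn_step \<rho> q))"
  by (rule lfp_unfold[OF sojourn_step_mono])

lemma mean_sojourn_nb_0: "T n 0 = 0"
  using fun_cong[OF fun_cong[OF lfp_sojourn_step_unfold, of n], of 0]
  by (simp add: mean_sojourn_nb_def sojourn_step_def)

lemma mean_sojourn_nb_first_step:
  assumes "b \<noteq> 0"
  shows "T n b = first_step T n b"
proof -
  have "lfp (sojourn_step \<rho> q) = (\<lambda>n b. ennreal (T n b))"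
    by (simp add: lfp_sojourn_step_eq fun_eq_iff)
  then have "ennreal (T n b) = sojourn_step \<rho> q (\<lambda>n b. ennreal (T n b)) n b"
    using lfp_sojourn_step_unfold by metis
  also have "\<dots> = ennreal (first_step T n b)"
    using assms mean_sojourn_nb_nonneg mean_sojourn_nb_le
    by (intro sojourn_step_ennreal after_arrival_linear_bound(1))
  finally have "ennreal (T n b) = ennreal (first_step T n b)" .
  moreover have "0 \<le> first_step T n b"
    using mean_sojourn_nb_nonneg mean_sojourn_nb_le
    by (intro first_step_nonneg after_arrival_linear_bound(1))
  ultimately show ?thesis
    using mean_sojourn_nb_nonneg by simp
qed

section \<open>Generating functions in the number of other jobs\<close>

abbreviation A :: "nat \<Rightarrow> nat \<Rightarrow> real" where
  "A \<equiv> after_arrival T"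

lemma summable_after_arrival_T: "summable (\<lambda>k. (1 - q) * q ^ k * T (n + Suc k) b)"
  using mean_sojourn_nb_nonneg mean_sojourn_nb_le by (rule after_arrival_linear_bound(1))

lemma after_arrival_T_nonneg: "0 \<le> A n b"
  using mean_sojourn_nb_nonneg summable_after_arrival_T by (rule after_arrival_nonneg)

lemma after_arrival_T_Suc: "A n b = (1 - q) * T (Suc n) b + q * A (Suc n) b"
proof -
  have "A n b = (\<Sum>k. (1 - q) * q ^ Suc k * T (n + Suc (Suc k)) b) + (1 - q) * T (Suc n) b"
    unfolding after_arrival_def using suminf_split_head[OF summable_after_arrival_T] by simp
  also have "(\<Sum>k. (1 - q) * q ^ Suc k * T (n + Suc (Suc k)) b) = q * A (Suc n) b"
    unfolding after_arrival_def using suminf_mult[OF summable_after_arrival_T[of "Suc n" b], of q]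
    by (simp add: algebra_simps)
  finally show ?thesis by simp
qed

lemma mean_sojourn_linear_growth:
  "T n b \<le> \<kappa> * (real b + 1 + q / (1 - q)) * (real n + 1)"
  "A n b \<le> \<kappa> * (real b + 1 + q / (1 - q)) * (real n + 1)"
proof -
  have Q: "0 \<le> q / (1 - q)" using q_pos q_lt1 by simp
  have le: "real n + real b \<le> (real b + 1 + q / (1 - q)) * (real n + 1)"
    "real n + real b + 1 + q / (1 - q) \<le> (real b + 1 + q / (1 - q)) * (real n + 1)"
    using Q mult_left_mono[of 1 "real n + 1" "real b + q / (1 - q)"] by (simp_all add: algebra_simps)
  have "T n b \<le> \<kappa> * (real n + real b)" by (rule mean_sojourn_nb_le)
  also have "\<dots> \<le> \<kappa> * ((real b + 1 + q / (1 - q)) * (real n + 1))"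
    using le(1) kappa_pos by (intro mult_left_mono) auto
  finally show "T n b \<le> \<kappa> * (real b + 1 + q / (1 - q)) * (real n + 1)" by (simp add: mult.assoc)
  have "A n b \<le> \<kappa> * (real n + real b + 1 + q / (1 - q))"
    by (rule after_arrival_linear_bound(2)[of T, OF mean_sojourn_nb_nonneg mean_sojourn_nb_le])
  also have "\<dots> \<le> \<kappa> * ((real b + 1 + q / (1 - q)) * (real n + 1))"
    using le(2) kappa_pos by (intro mult_left_mono) auto
  finally show "A n b \<le> \<kappa> * (real b + 1 + q / (1 - q)) * (real n + 1)" by (simp add: mult.assoc)
qed

definition gen_T :: "real \<Rightarrow> nat \<Rightarrow> real" where
  "gen_T x b = (\<Sum>n. T n b * x ^ n)"

definition gen_nT :: "real \<Rightarrow> nat \<Rightarrow> real" where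
  "gen_nT x b = (\<Sum>n. (real n * T n b) * x ^ n)"

definition gen_A :: "real \<Rightarrow> nat \<Rightarrow> real" where
  "gen_A x b = (\<Sum>n. A n b * x ^ n)"

definition gen_nA :: "real \<Rightarrow> nat \<Rightarrow> real" where
  "gen_nA x b = (\<Sum>n. (real n * A n b) * x ^ n)"

lemma summable_gen:
  assumes "0 \<le> x" "x < 1"
  shows "summable (\<lambda>n. T n b * x ^ n)" "summable (\<lambda>n. (real n * T n b) * x ^ n)"
    and "summable (\<lambda>n. A n b * x ^ n)" "summable (\<lambda>n. (real n * A n b) * x ^ n)"
  using summable_powser_linear_bound[OF mean_sojourn_nb_nonneg mean_sojourn_linear_growth(1) assms]
    summable_powser_linear_bound[OF after_arrival_T_nonneg mean_sojourn_linear_growth(2) assms]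
  by auto

lemma gen_T_0: "gen_T x 0 = 0"
  by (simp add: gen_T_def mean_sojourn_nb_0)

lemma after_arrival_T_0: "q * A 0 b = (1 - q) * (gen_T q b - T 0 b)"
proof -
  have sT: "summable (\<lambda>n. T n b * q ^ n)" using summable_gen q_pos q_lt1 by simp
  have "A 0 b = (1 - q) * (\<Sum>k. T (Suc k) b * q ^ k)"
    unfolding after_arrival_def using suminf_mult[OF powser_split_head(3)[OF sT], of "1 - q"]
    by (simp add: algebra_simps)
  then have "q * A 0 b = (1 - q) * ((\<Sum>k. T (Suc k) b * q ^ k) * q)"
    by simp
  also have "\<dots> = (1 - q) * (gen_T q b - T 0 b)"
    unfolding gen_T_def powser_split_head(2)[OF sT] ..
  finally show ?thesis .
qed

lemma gen_A_eq:
  assumes "0 \<le> x" "x < 1"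
  shows "(x - q) * gen_A x b = (1 - q) * (gen_T x b - gen_T q b)"
proof -
  note sT = summable_gen(1)[OF assms] and sA = summable_gen(3)[OF assms]
  have "gen_A x b = (\<Sum>n. (1 - q) * (T (Suc n) b * x ^ n) + q * (A (Suc n) b * x ^ n))"
    unfolding gen_A_def by (subst after_arrival_T_Suc) (simp add: algebra_simps)
  also have "\<dots> = (1 - q) * (\<Sum>n. T (Suc n) b * x ^ n) + q * (\<Sum>n. A (Suc n) b * x ^ n)"
    using powser_split_head(3)[OF sT] powser_split_head(3)[OF sA]
    by (simp add: suminf_add[symmetric] summable_mult suminf_mult)
  finally have "x * gen_A x b = (1 - q) * ((\<Sum>n. T (Suc n) b * x ^ n) * x) + q * ((\<Sum>n. A (Suc n) b * x ^ n) * x)"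
    by (metis (no_types, lifting) distrib_left mult.commute mult.left_commute)
  also have "\<dots> = (1 - q) * (gen_T x b - T 0 b) + q * (gen_A x b - A 0 b)"
    unfolding gen_T_def gen_A_def powser_split_head(2)[OF sT] powser_split_head(2)[OF sA] ..
  finally show ?thesis
    using after_arrival_T_0[of b] by (simp add: algebra_simps)
qed

lemma gen_nA_eq:
  assumes "0 \<le> x" "x < 1"
  shows "x * gen_nA x b = (1 - q) * (gen_nT x b - gen_T x b + T 0 b) + q * (gen_nA x b - gen_A x b + A 0 b)"
proof -
  note T_shift = powser_weighted_shift_down[of "\<lambda>n. T n b", OF summable_gen(1,2)[OF assms]]
  note A_shift = powser_weighted_shift_down[of "\<lambda>n. A n b", OF summable_gen(3,4)[OF assms]]
  have "gen_nA x b = (\<Sum>n. (1 - q) * ((real n * T (Suc n) b) * x ^ n) + q * ((real n * A (Suc n) b) * x ^ n))"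
    unfolding gen_nA_def by (subst after_arrival_T_Suc) (simp add: algebra_simps)
  also have "\<dots> = (1 - q) * (\<Sum>n. (real n * T (Suc n) b) * x ^ n) + q * (\<Sum>n. (real n * A (Suc n) b) * x ^ n)"
    using T_shift(1) A_shift(1) by (simp add: suminf_add[symmetric] summable_mult suminf_mult)
  finally have "x * gen_nA x b = (1 - q) * (x * (\<Sum>n. (real n * T (Suc n) b) * x ^ n))
                                  + q * (x * (\<Sum>n. (real n * A (Suc n) b) * x ^ n))"
    by (metis (no_types, lifting) distrib_left mult.left_commute)
  then show ?thesis
    unfolding T_shift(2) A_shift(2) gen_T_def gen_nT_def gen_A_def gen_nA_def .
qed

lemma first_step_cleared:
  assumes "b \<noteq> 0"
  shows "(1 + \<rho>) * ((real n + real b) * T n b) = (real n + real b) + \<rho> * ((real n + real b) * A n b)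
          + real n * T (n - 1) b + real b * T n (b - 1)"
proof -
  have N: "real n + real b \<noteq> 0" using assms by simp
  have "(1 + \<rho>) * T n b = 1 + \<rho> * A n b + real n / real (n + b) * T (n - 1) b
                           + real b / real (n + b) * T n (b - 1)"
    using mean_sojourn_nb_first_step[OF assms, of n] rho_pos unfolding first_step_def by simp
  then have "(1 + \<rho>) * ((real n + real b) * T n b)
      = (real n + real b) * (1 + \<rho> * A n b + real n / real (n + b) * T (n - 1) b
                              + real b / real (n + b) * T n (b - 1))"
    by (metis mult.left_commute)
  also have "\<dots> = (real n + real b) + \<rho> * ((real n + real b) * A n b)
                    + real n * T (n - 1) b + real b * T n (b - 1)"
    using N by (simp add: distrib_left)
  finally show ?thesis .
qed

lemma gen_first_step:
  assumes "b \<noteq> 0" "0 \<le> x" "x < 1"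
  shows "(1 + \<rho>) * (gen_nT x b + real b * gen_T x b)
           = x / (1 - x)^2 + real b / (1 - x) + \<rho> * (gen_nA x b + real b * gen_A x b)
             + x * (gen_nT x b + gen_T x b) + real b * gen_T x (b - 1)"
proof -
  note s = summable_gen[OF assms(2,3)]
  have "(\<lambda>n. (1 + \<rho>) * ((real n * T n b) * x ^ n + real b * (T n b * x ^ n))) sums
          ((1 + \<rho>) * (gen_nT x b + real b * gen_T x b))"
    unfolding gen_nT_def gen_T_def by (intro sums_mult sums_add summable_sums s)
  moreover have "(\<lambda>n. (real b + 1 * real n) * x ^ n + \<rho> * ((real n * A n b) * x ^ n + real b * (A n b * x ^ n))
                        + (real n * T (n - 1) b) * x ^ n + real b * (T n (b - 1) * x ^ n)) sums
          (real b / (1 - x) + 1 * x / (1 - x)^2 + \<rho> * (gen_nA x b + real b * gen_A x b)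
             + x * (gen_nT x b + gen_T x b) + real b * gen_T x (b - 1))"
    unfolding gen_nA_def gen_A_def gen_nT_def gen_T_def using assms(2,3)
    by (intro sums_add sums_mult sums_linear_times_power powser_weighted_shift_up summable_sums s
        summable_gen(1)) auto
  moreover have "(1 + \<rho>) * ((real n * T n b) * x ^ n + real b * (T n b * x ^ n))
      = (real b + 1 * real n) * x ^ n + \<rho> * ((real n * A n b) * x ^ n + real b * (A n b * x ^ n))
        + (real n * T (n - 1) b) * x ^ n + real b * (T n (b - 1) * x ^ n)" for n
    using arg_cong[OF first_step_cleared[OF assms(1), of n], of "\<lambda>y. y * x ^ n"]
    by (simp add: algebra_simps)
  ultimately show ?thesis
    by (simp add: sums_iff algebra_simps)
qed

definition u :: real where
  "u = \<rho> + q"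

lemma u_pos: "0 < u" and u_lt1: "u < 1" and q_lt_u: "q < u"
  using rho_pos q_pos stable by (auto simp: u_def)

text \<open>At \<open>x = u\<close> the \<open>n\<close>-weighted series \<open>gen_nT\<close> and \<open>gen_nA\<close> cancel out of the
  generating-function identities, leaving a recurrence in \<open>b\<close> for \<open>gen_T u\<close>.\<close>

lemma gen_T_recurrence:
  assumes "b \<noteq> 0"
  shows "u * (\<rho> * real b + 1 - q - \<rho>) * gen_T u b
     = \<rho> * (u / (1 - u)^2 + real b / (1 - u)) + (1 - q) * (u - \<rho> * real b) * gen_T q b
       + \<rho> * real b * gen_T u (b - 1)"
proof -
  have x: "0 \<le> u" "u < 1" using u_pos u_lt1 by auto
  note first = gen_first_step[OF assms x] and A = gen_A_eq[OF x, of b]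
    and nA = gen_nA_eq[OF x, of b] and A0 = after_arrival_T_0[of b]
  have elimination: "v * (r * c + 1 - q - r) * G = r * S + (1 - q) * (v - r * c) * Gq + r * c * G'"
    if "v = r + q" "(1 + r) * (N + c * G) = S + r * (NA + c * GA) + v * (N + G) + c * G'"
      "(v - q) * GA = (1 - q) * (G - Gq)"
      "v * NA = (1 - q) * (N - G + T0) + q * (NA - GA + A0)"
      "q * A0 = (1 - q) * (Gq - T0)"
    for v r c N G Gq G' NA GA T0 A0 S :: real
    using that by algebra
  show ?thesis
    by (rule elimination[OF u_def first A nA A0])
qed

lemma mean_sojourn_0_recurrence:
  assumes "b \<noteq> 0"
  shows "(q + \<rho>) * T 0 b = q + \<rho> * (1 - q) * gen_T q b + q * T 0 (b - 1)"
proof -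
  have "real b * ((1 + \<rho>) * T 0 b) = real b * (1 + \<rho> * A 0 b + T 0 (b - 1))"
    using first_step_cleared[OF assms, of 0] by (simp add: algebra_simps)
  then have "(1 + \<rho>) * T 0 b = 1 + \<rho> * A 0 b + T 0 (b - 1)"
    using assms by simp
  then have "q * ((1 + \<rho>) * T 0 b) = q + \<rho> * (q * A 0 b) + q * T 0 (b - 1)"
    by (simp add: algebra_simps)
  then show ?thesis unfolding after_arrival_T_0 by (simp add: algebra_simps)
qed

lemma gen_T_nonneg: "0 \<le> x \<Longrightarrow> x < 1 \<Longrightarrow> 0 \<le> gen_T x b"
  unfolding gen_T_def using summable_gen(1) mean_sojourn_nb_nonneg by (intro suminf_nonneg) auto

lemma gen_T_linear_growth:
  assumes "0 \<le> x" "x < 1"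
  shows "gen_T x b \<le> \<kappa> * (x / (1 - x)^2 + 1 / (1 - x)) * (real b + 1)"
proof -
  have geo: "(\<lambda>n. (real b + 1 * real n) * x ^ n) sums (real b / (1 - x) + 1 * x / (1 - x)^2)"
    by (rule sums_linear_times_power) (use assms in auto)
  have "gen_T x b \<le> (\<Sum>n. \<kappa> * ((real b + 1 * real n) * x ^ n))"
    unfolding gen_T_def
  proof (rule suminf_le)
    show "T n b * x ^ n \<le> \<kappa> * ((real b + 1 * real n) * x ^ n)" for n
      using mult_right_mono[OF mean_sojourn_nb_le[of n b], of "x ^ n"] assms by (simp add: algebra_simps)
  qed (use summable_gen(1) assms geo in \<open>auto intro!: summable_mult simp: sums_iff\<close>)
  also have "\<dots> = \<kappa> * (x / (1 - x)^2 + real b / (1 - x))"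
    using geo by (subst suminf_mult) (auto simp: sums_iff)
  also have "\<dots> \<le> \<kappa> * ((x / (1 - x)^2 + 1 / (1 - x)) * (real b + 1))"
  proof (intro mult_left_mono)
    have "x / (1 - x)^2 \<le> (real b + 1) * (x / (1 - x)^2)"
      using mult_right_mono[of 1 "real b + 1" "x / (1 - x)^2"] assms by simp
    moreover have "real b / (1 - x) \<le> (real b + 1) * (1 / (1 - x))"
      using assms by (simp add: divide_right_mono)
    ultimately show "x / (1 - x)^2 + real b / (1 - x) \<le> (x / (1 - x)^2 + 1 / (1 - x)) * (real b + 1)"
      by (simp add: algebra_simps)
  qed (use kappa_pos in simp)
  finally show ?thesis by (simp add: mult.assoc)
qed

lemma summable_gen_T_powser:
  assumes "0 \<le> x" "x < 1" "0 \<le> v" "v < 1"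
  shows "summable (\<lambda>b. gen_T x b * v ^ b)" "summable (\<lambda>b. (real b * gen_T x b) * v ^ b)"
  using summable_powser_linear_bound[OF gen_T_nonneg gen_T_linear_growth, OF assms(1,2,1,2,3,4)]
  by auto

lemma summable_mean_sojourn_0:
  assumes "0 \<le> v" "v < 1"
  shows "summable (\<lambda>b. T 0 b * v ^ b)"
proof (rule summable_powser_linear_bound(1)[OF mean_sojourn_nb_nonneg _ assms])
  show "T 0 b \<le> \<kappa> * (real b + 1)" for b
    using mean_sojourn_nb_le[of 0 b] kappa_pos by (simp add: algebra_simps)
qed

definition G :: "real \<Rightarrow> real" where
  "G v = (\<Sum>b. gen_T q b * v ^ b)"

definition K :: "real \<Rightarrow> real" where
  "K v = (\<Sum>b. gen_T u b * v ^ b)"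

definition Z :: real where
  "Z = (\<Sum>b. T 0 b * q ^ b)"

lemma E1_eq_G:
  assumes "0 \<le> v" "v < 1"
  shows "E1 \<rho> q v = - G v"
proof -
  let ?f = "\<lambda>n b. T n b * q ^ n * v ^ b"
  have inner: "(\<lambda>n. ?f n b) sums (gen_T q b * v ^ b)" for b
    unfolding gen_T_def using summable_gen(1) q_pos q_lt1
    by (intro sums_mult2 summable_sums) auto
  have "E1 \<rho> q v = - (\<Sum>b. \<Sum>n. ?f n b)"
    unfolding E1_def
  proof (subst infsum_nonneg_eq_iterated_suminf)
    show "summable (\<lambda>b. \<Sum>n. ?f n b)"
      using inner summable_gen_T_powser(1)[of q v] q_pos q_lt1 assms by (simp add: sums_iff)
  qed (use inner mean_sojourn_nb_nonneg mean_sojourn_nb_0 q_pos assms in \<open>auto simp: sums_iff\<close>)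
  then show ?thesis
    unfolding G_def using inner by (simp add: sums_iff)
qed

lemma prob_N_eq: "prob_N \<rho> q n = (1 - \<rho> / (1 - q)) / u * (\<rho> * u ^ n + (if n = 0 then q else 0))"
proof (cases n)
  case 0
  then show ?thesis using u_pos by (simp add: prob_N_def u_def)
next
  case (Suc m)
  then show ?thesis using u_pos by (simp add: prob_N_def u_def[symmetric])
qed

lemma sums_mean_sojourn_over_N:
  "(\<lambda>n. T n b * prob_N \<rho> q n) sums ((1 - \<rho> / (1 - q)) / u * (\<rho> * gen_T u b + q * T 0 b))"
proof -
  have "(\<lambda>n. (1 - \<rho> / (1 - q)) / u * (\<rho> * (T n b * u ^ n) + (if n = 0 then q * T n b else 0)))
          sums ((1 - \<rho> / (1 - q)) / u * (\<rho> * gen_T u b + q * T 0 b))"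
    unfolding gen_T_def using u_pos u_lt1
    by (intro sums_mult sums_add summable_sums summable_gen(1) sums_single) auto
  moreover have "(1 - \<rho> / (1 - q)) / u * (\<rho> * (T n b * u ^ n) + (if n = 0 then q * T n b else 0))
                   = T n b * prob_N \<rho> q n" for n
    by (simp add: prob_N_eq algebra_simps)
  ultimately show ?thesis by simp
qed

text \<open>Apart from its atom at \<open>0\<close>, \<open>N\<close> is geometric with ratio \<open>u\<close>, so averaging over \<open>N\<close>
  evaluates \<open>gen_T\<close> at \<open>u\<close>; averaging over the geometric \<open>B\<close> then evaluates at \<open>q\<close>.\<close>

lemma mean_sojourn_eq: "mean_sojourn \<rho> q = (1 - q - \<rho>) / (q * u) * (q * Z + \<rho> * K q)"
proof -
  let ?f = "\<lambda>n b. T n b * prob_N \<rho> q n * prob_B q b"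
  let ?g = "\<lambda>b. (1 - q - \<rho>) / (q * u) * (\<rho> * (gen_T u b * q ^ b) + q * (T 0 b * q ^ b))"
  have scale: "(1 - \<rho> / (1 - q)) * prob_B q b = (1 - q - \<rho>) / q * q ^ b" if "b \<noteq> 0" for b
    using that q_pos q_lt1 by (cases b) (simp_all add: prob_B_def field_simps)
  have inner: "(\<lambda>n. ?f n b) sums ?g b" for b
  proof -
    have "(\<lambda>n. ?f n b) sums ((1 - \<rho> / (1 - q)) / u * (\<rho> * gen_T u b + q * T 0 b) * prob_B q b)"
      by (rule sums_mult2[OF sums_mean_sojourn_over_N])
    moreover have "(1 - \<rho> / (1 - q)) / u * (\<rho> * gen_T u b + q * T 0 b) * prob_B q b = ?g b"
    proof (cases "b = 0")
      case False
      have "(1 - \<rho> / (1 - q)) / u * (\<rho> * gen_T u b + q * T 0 b) * prob_B q b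
              = ((1 - \<rho> / (1 - q)) * prob_B q b) * (\<rho> * gen_T u b + q * T 0 b) / u"
        by simp
      also have "\<dots> = ?g b"
        unfolding scale[OF False] using q_pos u_pos by (simp add: field_simps)
      finally show ?thesis .
    qed (simp add: gen_T_0 mean_sojourn_nb_0)
    ultimately show ?thesis by simp
  qed
  have outer: "?g sums ((1 - q - \<rho>) / (q * u) * (\<rho> * K q + q * Z))"
    unfolding K_def Z_def using u_pos u_lt1 q_pos q_lt1
    by (intro sums_mult sums_add summable_sums summable_gen_T_powser(1) summable_mean_sojourn_0) auto
  have "mean_sojourn \<rho> q = (\<Sum>b. \<Sum>n. ?f n b)"
    unfolding mean_sojourn_def
  proof (rule infsum_nonneg_eq_iterated_suminf)
    have "0 < 1 - \<rho> / (1 - q)" using stable q_lt1 by (simp add: field_simps)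
    then have "0 \<le> prob_N \<rho> q n" "0 \<le> prob_B q b" for n b
      using rho_pos q_pos q_lt1 by (simp_all add: prob_N_def prob_B_def)
    then show "0 \<le> ?f n b" for n b
      using mean_sojourn_nb_nonneg by simp
  qed (use inner outer mean_sojourn_nb_0 in \<open>auto simp: sums_iff\<close>)
  also have "\<dots> = (1 - q - \<rho>) / (q * u) * (q * Z + \<rho> * K q)"
    using inner outer by (simp add: sums_iff add.commute)
  finally show ?thesis .
qed

lemma Z_eq: "(q + \<rho> - q^2) * Z = q^2 / (1 - q) + \<rho> * (1 - q) * G q"
proof -
  have q: "0 \<le> q" "q < 1" using q_pos q_lt1 by auto
  have Z: "(\<lambda>b. T 0 b * q ^ b) sums Z" and Gq: "(\<lambda>b. gen_T q b * q ^ b) sums G q"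
    unfolding Z_def G_def using summable_mean_sojourn_0 summable_gen_T_powser(1) q
    by (auto intro: summable_sums)
  have "(\<lambda>b. (q + \<rho>) * (T 0 (Suc b) * q ^ Suc b)) sums ((q + \<rho>) * Z)"
    using Z sums_Suc_iff[of "\<lambda>b. T 0 b * q ^ b"] by (intro sums_mult) (simp add: mean_sojourn_nb_0)
  moreover have "(\<lambda>b. q * (q * q ^ b) + \<rho> * (1 - q) * (gen_T q (Suc b) * q ^ Suc b) + q * (q * (T 0 b * q ^ b)))
      sums (q * (q * (1 / (1 - q))) + \<rho> * (1 - q) * G q + q * (q * Z))"
    using q Gq sums_Suc_iff[of "\<lambda>b. gen_T q b * q ^ b"]
    by (intro sums_add sums_mult geometric_sums Z) (auto simp: gen_T_0)
  moreover have "(q + \<rho>) * (T 0 (Suc b) * q ^ Suc b)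
      = q * (q * q ^ b) + \<rho> * (1 - q) * (gen_T q (Suc b) * q ^ Suc b) + q * (q * (T 0 b * q ^ b))" for b
    using arg_cong[OF mean_sojourn_0_recurrence[of "Suc b"], of "\<lambda>y. y * q ^ Suc b"]
    by (simp add: algebra_simps)
  ultimately have "(q + \<rho>) * Z = q * (q * (1 / (1 - q))) + \<rho> * (1 - q) * G q + q * (q * Z)"
    by (simp add: sums_iff)
  then show ?thesis by (simp add: algebra_simps power2_eq_square)
qed

section \<open>A differential equation for \<open>K\<close>\<close>

definition c :: real where
  "c = (1 - q - \<rho>) / \<rho>"

lemma c_pos: "0 < c"
  using stable rho_pos by (simp add: c_def)

lemma c_mult_rho: "c * \<rho> = 1 - q - \<rho>"
  using rho_pos by (simp add: c_def)

lemma u_plus_rho_c: "u + \<rho> * c = 1"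
  using c_mult_rho by (simp add: u_def algebra_simps)

definition DK :: "real \<Rightarrow> real" where
  "DK v = (\<Sum>b. (real b * gen_T u b) * v ^ b)"

definition DG :: "real \<Rightarrow> real" where
  "DG v = (\<Sum>b. (real b * gen_T q b) * v ^ b)"

lemma gen_T_recurrence_normalized:
  "u * (real b + c) * gen_T u b - real b * gen_T u (b - 1)
     = (if b = 0 then 0 else u / (1 - u)^2 + real b / (1 - u)) + (1 - q) * (u / \<rho> - real b) * gen_T q b"
proof (cases "b = 0")
  case False
  have "\<rho> * (u * (real b + c) * gen_T u b - real b * gen_T u (b - 1))
     = \<rho> * (u / (1 - u)^2 + real b / (1 - u) + (1 - q) * (u / \<rho> - real b) * gen_T q b)"
  proof -
    have "\<rho> * (u * (real b + c) * gen_T u b) = u * (\<rho> * real b + c * \<rho>) * gen_T u b"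
      by (simp add: algebra_simps)
    also have "\<dots> = u * (\<rho> * real b + 1 - q - \<rho>) * gen_T u b"
      unfolding c_mult_rho by (simp add: algebra_simps)
    finally have "\<rho> * (u * (real b + c) * gen_T u b) = u * (\<rho> * real b + 1 - q - \<rho>) * gen_T u b" .
    moreover have "\<rho> * ((1 - q) * (u / \<rho> - real b) * gen_T q b) = (1 - q) * (u - \<rho> * real b) * gen_T q b"
      using rho_pos by (simp add: field_simps)
    ultimately show ?thesis
      using gen_T_recurrence[OF False] by (simp add: algebra_simps)
  qed
  then show ?thesis using False rho_pos by simp
qed (simp add: gen_T_0)

lemma sums_source:
  assumes "0 \<le> v" "v < 1"
  shows "(\<lambda>b. (if b = 0 then 0 else u / (1 - u)^2 + real b / (1 - u)) * v ^ b) sums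
           (v * (1 - u * v) / ((1 - u)^2 * (1 - v)^2))"
proof -
  let ?a = "u / (1 - u)^2"
  have "(\<lambda>b. (?a + 1 / (1 - u) * real b) * v ^ b - (if b = 0 then ?a else 0)) sums
          (?a / (1 - v) + 1 / (1 - u) * v / (1 - v)^2 - ?a)"
    using assms by (intro sums_diff sums_linear_times_power sums_single) auto
  moreover have "(\<lambda>b. (?a + 1 / (1 - u) * real b) * v ^ b - (if b = 0 then ?a else 0))
                   = (\<lambda>b. (if b = 0 then 0 else ?a + real b / (1 - u)) * v ^ b)"
    by (rule ext) simp
  moreover have "u / (1 - u)^2 / (1 - v) + 1 / (1 - u) * v / (1 - v)^2 - u / (1 - u)^2
                   = v * (1 - u * v) / ((1 - u)^2 * (1 - v)^2)"
  proof -
    have "1 - u \<noteq> 0" "1 - v \<noteq> 0" using assms u_lt1 by auto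
    then show ?thesis by (simp add: divide_simps) (simp add: algebra_simps power2_eq_square)
  qed
  ultimately show ?thesis by simp
qed

lemma K_ode:
  assumes "0 \<le> v" "v < 1"
  shows "(u - v) * DK v + (c * u - v) * K v
           = v * (1 - u * v) / ((1 - u)^2 * (1 - v)^2) + (1 - q) * (u / \<rho> * G v - DG v)"
proof -
  have u: "0 \<le> u" "u < 1" and q: "0 \<le> q" "q < 1" using u_pos u_lt1 q_pos q_lt1 by auto
  note sK = summable_gen_T_powser[OF u assms] and sG = summable_gen_T_powser[OF q assms]
  have pointwise: "u * ((B * g) * V) + u * c * (g * V) - (B * g') * V
                   = S * V + (1 - q) * (W * (gq * V) - (B * gq) * V)"
    if "u * (B + c) * g - B * g' = S + (1 - q) * (W - B) * gq" for B g g' S W gq V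
  proof -
    have "u * ((B * g) * V) + u * c * (g * V) - (B * g') * V = (u * (B + c) * g - B * g') * V"
      by (simp add: algebra_simps)
    also have "\<dots> = S * V + (1 - q) * (W * (gq * V) - (B * gq) * V)"
      unfolding that by (simp add: algebra_simps)
    finally show ?thesis .
  qed
  have "(\<lambda>b. u * ((real b * gen_T u b) * v ^ b) + u * c * (gen_T u b * v ^ b)
               - (real b * gen_T u (b - 1)) * v ^ b) sums
          (u * DK v + u * c * K v - v * (DK v + K v))"
    unfolding DK_def K_def
    by (intro sums_diff sums_add sums_mult summable_sums sK powser_weighted_shift_up[OF sK])
  moreover have "(\<lambda>b. (if b = 0 then 0 else u / (1 - u)^2 + real b / (1 - u)) * v ^ b
                        + (1 - q) * (u / \<rho> * (gen_T q b * v ^ b) - (real b * gen_T q b) * v ^ b)) sums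
          (v * (1 - u * v) / ((1 - u)^2 * (1 - v)^2) + (1 - q) * (u / \<rho> * G v - DG v))"
    unfolding G_def DG_def
    by (intro sums_add sums_mult sums_diff sums_source[OF assms] summable_sums sG)
  moreover note pointwise[OF gen_T_recurrence_normalized]
  ultimately have "u * DK v + u * c * K v - v * (DK v + K v)
      = v * (1 - u * v) / ((1 - u)^2 * (1 - v)^2) + (1 - q) * (u / \<rho> * G v - DG v)"
    by (simp add: sums_iff)
  then show ?thesis by (simp add: algebra_simps)
qed

lemma K_has_real_derivative:
  assumes "0 < v" "v < 1"
  shows "(K has_real_derivative DK v / v) (at v)"
proof -
  have "summable (\<lambda>b. gen_T u b * ((v + 1) / 2) ^ b)"
    using u_pos u_lt1 assms by (intro summable_gen_T_powser) auto
  from powser_has_real_derivative_weighted(1)[OF this assms(1)] assms show ?thesis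
    unfolding K_def[abs_def] DK_def by simp
qed

lemma G_has_real_derivative:
  assumes "0 < v" "v < 1"
  shows "(G has_real_derivative DG v / v) (at v)"
proof -
  have "summable (\<lambda>b. gen_T q b * ((v + 1) / 2) ^ b)"
    using q_pos q_lt1 assms by (intro summable_gen_T_powser) auto
  from powser_has_real_derivative_weighted(1)[OF this assms(1)] assms show ?thesis
    unfolding G_def[abs_def] DG_def by simp
qed

section \<open>Integrating the differential equation\<close>

definition weight :: "real \<Rightarrow> real" where
  "weight v = v powr c / (u - v) powr c"

lemma weight_has_real_derivative:
  assumes "0 < v" "v < u"
  shows "(weight has_real_derivative weight v * (c * u / (v * (u - v)))) (at v)"
proof -
  have num: "((\<lambda>x. x powr c) has_real_derivative c * (v powr c / v)) (at v)"
    using has_real_derivative_powr[OF assms(1), of c] assms(1) by (simp add: powr_diff)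
  have "((\<lambda>x. (u - x) powr c) has_real_derivative (u - v) powr c * (0 * ln (u - v) + (0 - 1) * c / (u - v))) (at v)"
    using assms by (intro DERIV_powr DERIV_diff DERIV_const DERIV_ident) auto
  then have den: "((\<lambda>x. (u - x) powr c) has_real_derivative - c * ((u - v) powr c / (u - v))) (at v)"
    by (simp add: mult.commute)
  have W: "0 < (u - v) powr c" using assms by simp
  have "(weight has_real_derivative
      (c * (v powr c / v) * (u - v) powr c - v powr c * (- c * ((u - v) powr c / (u - v))))
        / ((u - v) powr c * (u - v) powr c)) (at v)"
    unfolding weight_def[abs_def] by (rule DERIV_divide[OF num den]) (use W in simp)
  moreover have "(c * (P / v) * W - P * (- c * (W / (u - v)))) / (W * W) = P / W * (c * u / (v * (u - v)))"
    if "W \<noteq> 0" for P W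
    using that assms by (simp add: field_simps)
  ultimately show ?thesis
    using W unfolding weight_def by simp
qed

definition hyp_scale :: real where
  "hyp_scale = \<rho> * c / u"

lemma hyp_scale_pos: "0 < hyp_scale"
  using rho_pos c_pos u_pos by (simp add: hyp_scale_def)

lemma one_minus_hyp_scale:
  assumes "v < 1"
  shows "1 - hyp_scale * (v / (1 - v)) = (u - v) / (u * (1 - v))"
proof -
  have "1 - hyp_scale * (v / (1 - v)) = (u * (1 - v) - \<rho> * c * v) / (u * (1 - v))"
    unfolding hyp_scale_def using assms u_pos by (simp add: field_simps)
  also have "u * (1 - v) - \<rho> * c * v = u - v * (u + \<rho> * c)"
    by (simp add: algebra_simps)
  also have "\<dots> = u - v"
    unfolding u_plus_rho_c by simp
  finally show ?thesis .
qed

lemma hyp_scale_bounds: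
  assumes "0 \<le> v" "v < u"
  shows "0 \<le> hyp_scale * (v / (1 - v))" "hyp_scale * (v / (1 - v)) < 1"
proof -
  have "v < 1" using assms u_lt1 by simp
  then show "0 \<le> hyp_scale * (v / (1 - v))" using assms hyp_scale_pos by simp
  have "0 < (u - v) / (u * (1 - v))" using assms \<open>v < 1\<close> u_pos by simp
  then show "hyp_scale * (v / (1 - v)) < 1" using one_minus_hyp_scale[OF \<open>v < 1\<close>] by simp
qed

definition M_hyp :: "real \<Rightarrow> real" where
  "M_hyp v = (v / (1 - v)) powr (c + 1) * hyp2F1 (c + 1) c (c + 1 + 1) (hyp_scale * (v / (1 - v)))"

definition M_app :: "real \<Rightarrow> real" where
  "M_app v = v powr (c + 2) * appellF1 (c + 2) c 2 (c + 2 + 1) (v / u) v"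

lemma M_hyp_eq_scaled:
  assumes "0 < x" "x < 1"
  shows "M_hyp x = hyp_scale powr (- (c + 1))
           * ((hyp_scale * (x / (1 - x))) powr (c + 1) * hyp2F1 (c + 1) c (c + 1 + 1) (hyp_scale * (x / (1 - x))))"
proof -
  have "(hyp_scale * (x / (1 - x))) powr (c + 1) = hyp_scale powr (c + 1) * (x / (1 - x)) powr (c + 1)"
    using assms hyp_scale_pos by (intro powr_mult)
  moreover have "hyp_scale powr (- (c + 1)) * hyp_scale powr (c + 1) = 1"
    using hyp_scale_pos by (simp add: powr_add[symmetric])
  ultimately have "hyp_scale powr (- (c + 1)) * (hyp_scale * (x / (1 - x))) powr (c + 1) = (x / (1 - x)) powr (c + 1)"
    by (simp add: mult.assoc[symmetric])
  then show ?thesis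
    unfolding M_hyp_def by (simp add: mult.assoc[symmetric])
qed

lemma M_hyp_has_real_derivative:
  assumes "0 < v" "v < u"
  shows "(M_hyp has_real_derivative (c + 1) * u powr c * weight v / (1 - v)^2) (at v)"
proof -
  have v1: "v < 1" using assms u_lt1 by simp
  define z where "z x = hyp_scale * (x / (1 - x))" for x
  define H where "H y = y powr (c + 1) * hyp2F1 (c + 1) c (c + 1 + 1) y" for y
  have "0 < z v" "z v < 1"
    using hyp_scale_bounds[of v] assms hyp_scale_pos v1 unfolding z_def by auto
  then have dH: "(H has_real_derivative (c + 1) * z v powr c * (1 - z v) powr (- c)) (at (z v))"
    unfolding H_def using DERIV_powr_times_hyp2F1[of "c + 1" c "z v"] c_pos by simp
  have "((\<lambda>x. x / (1 - x)) has_real_derivative 1 / (1 - v)^2) (at v)"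
    using v1 by (auto intro!: derivative_eq_intros simp: power2_eq_square field_simps)
  then have dz: "(z has_real_derivative hyp_scale / (1 - v)^2) (at v)"
    unfolding z_def[abs_def] using DERIV_cmult by fastforce
  have "(M_hyp has_real_derivative
      hyp_scale powr (- (c + 1)) * ((c + 1) * z v powr c * (1 - z v) powr (- c) * (hyp_scale / (1 - v)^2))) (at v)"
    using assms v1 M_hyp_eq_scaled
    by (intro has_field_derivative_transform_within_open[OF DERIV_cmult[OF DERIV_chain2[OF dH dz]],
          of "{0<..<1}"]) (auto simp: H_def z_def)
  moreover have "hyp_scale powr (- (c + 1)) * ((c + 1) * z v powr c * (1 - z v) powr (- c) * (hyp_scale / (1 - v)^2))
      = (c + 1) * u powr c * weight v / (1 - v)^2"
  proof -
    have e1: "z v powr c = hyp_scale powr c * (v powr c / (1 - v) powr c)"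
      unfolding z_def using assms v1 by (simp add: powr_mult powr_divide)
    have e2: "(1 - z v) powr (- c) = u powr c * (1 - v) powr c / (u - v) powr c"
      unfolding z_def one_minus_hyp_scale[OF v1] using assms v1 u_pos
      by (simp add: powr_minus powr_divide powr_mult)
    have e3: "hyp_scale powr (- (c + 1)) = 1 / (hyp_scale powr c * hyp_scale)"
      using hyp_scale_pos by (rule powr_minus_add1)
    have "0 < hyp_scale powr c" "0 < (1 - v) powr c" "0 < (u - v) powr c"
      using hyp_scale_pos assms v1 by auto
    then show ?thesis
      unfolding e1 e2 e3 weight_def using hyp_scale_pos v1 by (simp add: field_simps)
  qed
  ultimately show ?thesis by (simp only:)
qed

lemma M_app_has_real_derivative:
  assumes "0 < v" "v < u"
  shows "(M_app has_real_derivative (c + 2) * u powr c * weight v * v / (1 - v)^2) (at v)"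
proof -
  have "(M_app has_real_derivative (c + 2) * v powr (c + 2 - 1) * ((1 - v / u) powr (- c) * (1 - v) powr (- 2))) (at v)"
    unfolding M_app_def[abs_def]
    by (rule DERIV_powr_times_appellF1) (use c_pos u_pos u_lt1 assms in auto)
  moreover have "v powr (c + 2 - 1) = v powr c * v"
    using assms powr_add[of v 1 c] by (simp add: mult.commute)
  moreover have "(1 - v / u) powr (- c) = u powr c / (u - v) powr c"
  proof -
    have "1 - v / u = (u - v) / u" using u_pos by (simp add: field_simps)
    then show ?thesis using assms u_pos by (simp add: powr_minus powr_divide)
  qed
  moreover have "(1 - v) powr (- 2) = 1 / (1 - v)^2"
    using assms u_lt1 by (simp add: powr_minus powr_numeral divide_inverse)
  ultimately show ?thesis
    unfolding weight_def by (simp add: field_simps)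
qed

definition M :: "real \<Rightarrow> real" where
  "M v = u * M_app v / ((1 - u)^2 * (c + 2) * u powr c) - M_hyp v / ((1 - u)^2 * (c + 1) * u powr c)"

definition Psi :: "real \<Rightarrow> real" where
  "Psi v = weight v * (u - v) * K v + (1 - q) * (weight v * G v) + M v"

definition Omega2_integrand :: "real \<Rightarrow> real" where
  "Omega2_integrand \<xi> = (1 - \<xi>) * \<xi> powr ((1 - 2 * \<rho> - q) / \<rho>)
                           * (\<rho> + q - \<xi>) powr (- (1 - q) / \<rho>) * E1 \<rho> q \<xi>"

lemma Omega2_integrand_eq:
  assumes "0 < v" "v < u"
  shows "Omega2_integrand v = - ((1 - v) * weight v / (v * (u - v)) * G v)"
proof -
  have e1: "(1 - 2 * \<rho> - q) / \<rho> = c - 1" and e2: "- (1 - q) / \<rho> = - (c + 1)"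
    unfolding c_def using rho_pos by (simp_all add: field_simps)
  have p1: "v powr (c - 1) = v powr c / v" using assms by (simp add: powr_diff)
  have p2: "(u - v) powr (- (c + 1)) = 1 / ((u - v) powr c * (u - v))"
    using assms by (intro powr_minus_add1) simp
  have E: "E1 \<rho> q v = - G v" using E1_eq_G assms u_lt1 by simp
  show ?thesis
    unfolding Omega2_integrand_def e1 e2 p1 E p2[unfolded u_def] unfolding weight_def u_def by simp
qed

lemma K_part_has_real_derivative:
  assumes "0 < v" "v < u"
  shows "((\<lambda>x. weight x * (u - x) * K x) has_real_derivative
           weight v / v * ((u - v) * DK v + (c * u - v) * K v)) (at v)"
proof -
  have "v < 1" using assms u_lt1 by simp
  have "((\<lambda>x. weight x * (u - x) * K x) has_real_derivative
          weight v * (u - v) * (DK v / v)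
          + (weight v * (0 - 1) + weight v * (c * u / (v * (u - v))) * (u - v)) * K v) (at v)"
    by (intro DERIV_mult' DERIV_diff DERIV_const DERIV_ident weight_has_real_derivative
        K_has_real_derivative assms \<open>v < 1\<close>)
  moreover have "weight v * (u - v) * (DK v / v)
                   + (weight v * (0 - 1) + weight v * (c * u / (v * (u - v))) * (u - v)) * K v
                 = weight v / v * ((u - v) * DK v + (c * u - v) * K v)"
    using assms by (simp add: field_simps)
  ultimately show ?thesis by simp
qed

lemma G_part_has_real_derivative:
  assumes "0 < v" "v < u"
  shows "((\<lambda>x. weight x * G x) has_real_derivative weight v / v * (c * u / (u - v) * G v + DG v)) (at v)"
proof -
  have "v < 1" using assms u_lt1 by simp
  have "((\<lambda>x. weight x * G x) has_real_derivative
          weight v * (DG v / v) + weight v * (c * u / (v * (u - v))) * G v) (at v)"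
    by (intro DERIV_mult' weight_has_real_derivative G_has_real_derivative assms \<open>v < 1\<close>)
  moreover have "weight v * (DG v / v) + weight v * (c * u / (v * (u - v))) * G v
                   = weight v / v * (c * u / (u - v) * G v + DG v)"
    using assms by (simp add: field_simps)
  ultimately show ?thesis by simp
qed

lemma M_has_real_derivative:
  assumes "0 < v" "v < u"
  shows "(M has_real_derivative - (weight v / v * (v * (1 - u * v) / ((1 - u)^2 * (1 - v)^2)))) (at v)"
proof -
  have cancel: "u * (C2 * U * W * v / (1 - v)^2) / ((1 - u)^2 * C2 * U) - C1 * U * W / (1 - v)^2 / ((1 - u)^2 * C1 * U)
                  = - (W / v * (v * (1 - u * v) / ((1 - u)^2 * (1 - v)^2)))"
    if "U \<noteq> 0" "C1 \<noteq> 0" "C2 \<noteq> 0" for U W C1 C2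
  proof -
    have "1 - u \<noteq> 0" "1 - v \<noteq> 0" "v \<noteq> 0" using u_lt1 assms by auto
    with that show ?thesis by (simp add: field_simps)
  qed
  have nonzero: "u powr c \<noteq> 0" "c + 1 \<noteq> 0" "c + 2 \<noteq> 0" using u_pos c_pos by auto
  have "(M has_real_derivative
           u * ((c + 2) * u powr c * weight v * v / (1 - v)^2) / ((1 - u)^2 * (c + 2) * u powr c)
           - (c + 1) * u powr c * weight v / (1 - v)^2 / ((1 - u)^2 * (c + 1) * u powr c)) (at v)"
    unfolding M_def[abs_def]
    by (intro DERIV_diff DERIV_cdivide DERIV_cmult M_app_has_real_derivative M_hyp_has_real_derivative assms)
  then show ?thesis unfolding cancel[OF nonzero] .
qed

text \<open>\<open>weight v / v\<close> is an integrating factor for the differential equation of \<open>K\<close>: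
  the derivative of \<open>Psi\<close> no longer involves \<open>K\<close> or \<open>DG\<close>, only \<open>G = - E1\<close>.\<close>

lemma Psi_has_real_derivative:
  assumes "0 < v" "v < u"
  shows "(Psi has_real_derivative - (1 - q) * u / \<rho> * Omega2_integrand v) (at v)"
proof -
  have v: "0 \<le> v" "v < 1" "0 < u - v" "0 < 1 - v" using assms u_lt1 by auto
  have combine: "X * P + (1 - q) * (X * (B * g + dg)) + - (X * S) = X * ((1 - q) * g * (A + B))"
    if "P = S + (1 - q) * (A * g - dg)" for X P g dg A B S :: real
    unfolding that by (simp add: algebra_simps)
  have "(Psi has_real_derivative
          weight v / v * ((u - v) * DK v + (c * u - v) * K v)
          + (1 - q) * (weight v / v * (c * u / (u - v) * G v + DG v))
          + - (weight v / v * (v * (1 - u * v) / ((1 - u)^2 * (1 - v)^2)))) (at v)"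
    unfolding Psi_def[abs_def]
    by (intro DERIV_add DERIV_cmult K_part_has_real_derivative G_part_has_real_derivative
        M_has_real_derivative assms)
  also have "weight v / v * ((u - v) * DK v + (c * u - v) * K v)
          + (1 - q) * (weight v / v * (c * u / (u - v) * G v + DG v))
          + - (weight v / v * (v * (1 - u * v) / ((1 - u)^2 * (1 - v)^2)))
        = weight v / v * ((1 - q) * G v * (u / \<rho> + c * u / (u - v)))"
    by (rule combine[OF K_ode[OF v(1,2)]])
  also have "u / \<rho> + c * u / (u - v) = u * (1 - v) / (\<rho> * (u - v))"
  proof -
    have "u * u + \<rho> * (u * c) = u"
      using u_plus_rho_c by (metis distrib_left mult.left_commute mult_1_right)
    then show ?thesis using v rho_pos by (simp add: field_simps)
  qed
  also have "weight v / v * ((1 - q) * G v * (u * (1 - v) / (\<rho> * (u - v))))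
               = (1 - q) * u / \<rho> * ((1 - v) * weight v / (v * (u - v)) * G v)"
    using v rho_pos by (simp add: field_simps)
  also have "\<dots> = - (1 - q) * u / \<rho> * Omega2_integrand v"
    unfolding Omega2_integrand_eq[OF assms]
    by (simp only: divide_minus_left mult_minus_left mult_minus_right minus_minus)
  finally show ?thesis .
qed

lemma continuous_on_powser_gen_T:
  assumes "0 \<le> x" "x < 1" "r < 1"
  shows "continuous_on {0..r} (\<lambda>v. \<Sum>b. gen_T x b * v ^ b)"
proof (intro continuous_at_imp_continuous_on ballI)
  fix v assume "v \<in> {0..r}"
  have "summable (\<lambda>b. gen_T x b * ((r + 1) / 2) ^ b)"
    using assms \<open>v \<in> {0..r}\<close> by (intro summable_gen_T_powser) auto
  then show "isCont (\<lambda>v. \<Sum>b. gen_T x b * v ^ b) v"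
    by (rule isCont_powser) (use assms \<open>v \<in> {0..r}\<close> in auto)
qed

lemma continuous_on_weight: "r < u \<Longrightarrow> continuous_on {0..r} weight"
  unfolding weight_def[abs_def]
  by (intro continuous_on_divide continuous_on_powr' continuous_on_powr continuous_on_id
      continuous_on_const continuous_on_diff) (use c_pos in auto)

lemma continuous_on_M_hyp:
  assumes "r < u"
  shows "continuous_on {0..r} M_hyp"
proof -
  have "r < 1" using assms u_lt1 by simp
  have "continuous_on {0..r} (\<lambda>v. hyp2F1 (c + 1) c (c + 1 + 1) (hyp_scale * (v / (1 - v))))"
  proof (intro continuous_at_imp_continuous_on ballI)
    fix v assume v: "v \<in> {0..r}"
    have "isCont (\<lambda>v. hyp_scale * (v / (1 - v))) v" using v \<open>r < 1\<close> by (intro continuous_intros) auto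
    moreover have "isCont (hyp2F1 (c + 1) c (c + 1 + 1)) (hyp_scale * (v / (1 - v)))"
      using c_pos hyp_scale_bounds[of v] v assms by (intro isCont_hyp2F1_plus1) auto
    ultimately show "isCont (\<lambda>v. hyp2F1 (c + 1) c (c + 1 + 1) (hyp_scale * (v / (1 - v)))) v"
      by (rule isCont_o2)
  qed
  moreover have "continuous_on {0..r} (\<lambda>v. (v / (1 - v)) powr (c + 1))"
    using \<open>r < 1\<close> c_pos by (intro continuous_on_powr' continuous_intros) auto
  ultimately show ?thesis
    unfolding M_hyp_def[abs_def] by (intro continuous_on_mult)
qed

lemma continuous_on_M_app: "r < u \<Longrightarrow> continuous_on {0..r} M_app"
  unfolding M_app_def[abs_def]
  by (intro continuous_on_mult continuous_on_powr' continuous_on_id continuous_on_const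
      continuous_on_appellF1) (use c_pos u_pos u_lt1 in auto)

lemma continuous_on_Psi: "r < u \<Longrightarrow> continuous_on {0..r} Psi"
  unfolding Psi_def[abs_def] M_def[abs_def] K_def[abs_def] G_def[abs_def]
  by (intro continuous_on_add continuous_on_diff continuous_on_mult continuous_on_divide
      continuous_on_const continuous_on_id continuous_on_weight continuous_on_M_hyp continuous_on_M_app
      continuous_on_powser_gen_T) (use u_pos u_lt1 q_pos q_lt1 c_pos in auto)

lemma Psi_0: "Psi 0 = 0"
  by (simp add: Psi_def M_def weight_def M_hyp_def M_app_def)

lemma integral_Omega2_integrand:
  assumes "0 \<le> r" "r < u"
  shows "integral {0..r} Omega2_integrand = - \<rho> / ((1 - q) * u) * Psi r"
proof -
  have "((\<lambda>x. - (1 - q) * u / \<rho> * Omega2_integrand x) has_integral Psi r - Psi 0) {0..r}"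
  proof (rule fundamental_theorem_of_calculus_interior)
    show "(Psi has_vector_derivative - (1 - q) * u / \<rho> * Omega2_integrand x) (at x)"
      if "x \<in> {0<..<r}" for x
      using Psi_has_real_derivative[of x] that assms
      unfolding has_real_derivative_iff_has_vector_derivative by simp
  qed (use assms continuous_on_Psi in auto)
  then have "((\<lambda>x. - \<rho> / ((1 - q) * u) * (- (1 - q) * u / \<rho> * Omega2_integrand x)) has_integral
               - \<rho> / ((1 - q) * u) * (Psi r - Psi 0)) {0..r}"
    by (rule has_integral_mult_right)
  moreover have "- \<rho> / ((1 - q) * u) * (- (1 - q) * u / \<rho> * y) = y" for y
    using q_lt1 u_pos rho_pos by (simp add: field_simps)
  ultimately show ?thesis
    unfolding Psi_0 by (simp add: integral_unique)
qed

section \<open>Evaluation at \<open>v = q\<close>\<close>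

lemma weight_q: "weight q = q powr c / \<rho> powr c"
  by (simp add: weight_def u_def)

lemma Omega2_at_q: "\<rho>^2 * Omega2 \<rho> q q = - Psi q / weight q"
proof -
  have e1: "(\<rho> + q - 1) / \<rho> = - c" and e2: "- (2 * \<rho> + q - 1) / \<rho> = c - 1"
    unfolding c_def using rho_pos by (simp_all add: field_simps)
  have "Omega2 \<rho> q q = (1 - q) * u / \<rho>^2 * q powr (- c) * \<rho> powr (c - 1) * integral {0..q} Omega2_integrand"
    unfolding Omega2_def Omega2_integrand_def[abs_def] e1 e2 by (simp add: u_def)
  also have "integral {0..q} Omega2_integrand = - \<rho> / ((1 - q) * u) * Psi q"
    using q_pos q_lt_u by (intro integral_Omega2_integrand) auto
  finally have "\<rho>^2 * Omega2 \<rho> q q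
                  = - (q powr (- c) * (\<rho> powr (c - 1) * \<rho>)) * Psi q * ((1 - q) * u / ((1 - q) * u))"
    using rho_pos by (simp add: field_simps power2_eq_square)
  also have "\<dots> = - Psi q / weight q"
    unfolding weight_q using rho_pos q_pos q_lt1 u_pos
    by (simp add: powr_minus powr_diff divide_inverse)
  finally show ?thesis .
qed

lemma M_at_q:
  "\<rho>^2 * (q / (1 - q - \<rho>)^2 * (\<rho> / (\<rho> + q)) powr ((1 - q - 2 * \<rho>) / \<rho>) * Omega1 \<rho> q q)
     = M q / weight q"
proof -
  define AF where "AF = appellF1 (c + 2) c 2 (c + 2 + 1) (q / u) q"
  define HF where "HF = hyp2F1 (c + 1) c (c + 1 + 1) (hyp_scale * (q / (1 - q)))"
  have c1: "c + 1 = (1 - q) / \<rho>" and c2: "c + 2 = (1 - q + \<rho>) / \<rho>" and c3: "c + 2 + 1 = (1 - q + 2 * \<rho>) / \<rho>"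
    unfolding c_def using rho_pos by (simp_all add: field_simps)
  have "hyp_scale * (q / (1 - q)) = (c * \<rho>) * q / (u * (1 - q))"
    unfolding hyp_scale_def by (simp add: mult.commute)
  then have "q * (1 - q - \<rho>) / ((1 - q) * (q + \<rho>)) = hyp_scale * (q / (1 - q))"
    unfolding c_mult_rho by (simp add: u_def algebra_simps)
  moreover have "(1 - q) powr ((q - 1) / \<rho>) = 1 / ((1 - q) powr c * (1 - q))"
  proof -
    have "(q - 1) / \<rho> = - (c + 1)" unfolding c1 by (simp add: minus_divide_left)
    then show ?thesis using powr_minus_add1[of "1 - q" c] q_lt1 by simp
  qed
  ultimately have Omega1: "Omega1 \<rho> q q = q / (1 - q + \<rho>) * AF - 1 / ((1 - q) powr c * (1 - q)) / ((1 - q) * u) * HF"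
    unfolding Omega1_def AF_def HF_def c1[symmetric] c2[symmetric] c3[symmetric] c_def[symmetric]
    by (simp add: u_def add.commute add.left_commute)
  have pw: "(\<rho> / (\<rho> + q)) powr ((1 - q - 2 * \<rho>) / \<rho>) = \<rho> powr c / u powr c * (u / \<rho>)"
  proof -
    have "(1 - q - 2 * \<rho>) / \<rho> = c - 1" unfolding c_def using rho_pos by (simp add: field_simps)
    then show ?thesis using rho_pos u_pos by (simp add: u_def[symmetric] powr_diff powr_divide)
  qed
  have app: "M_app q = q powr c * q^2 * AF"
    unfolding M_app_def AF_def using q_pos by (simp add: powr_add powr_numeral)
  have hyp: "M_hyp q = q powr c * q / ((1 - q) powr c * (1 - q)) * HF"
    unfolding M_hyp_def HF_def using q_pos q_lt1 by (simp add: powr_add powr_divide)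
  have u: "1 - u = 1 - q - \<rho>" by (simp add: u_def)
  have rearrange: "\<rho>^2 * (q / d^2 * (R / U * (u / \<rho>)) * (q / f * AF - 1 / (W * e) / (e * u) * HF))
          = (u * (Q * q^2 * AF) / (d^2 * (f / \<rho>) * U) - Q * q / (W * e) * HF / (d^2 * (e / \<rho>) * U)) / (Q / R)"
    if "Q > 0" "R > 0" "U > 0" "W > 0" "d \<noteq> 0" "e \<noteq> 0" "f \<noteq> 0" for Q R U W d e f
    using that rho_pos u_pos by (simp add: field_simps) (simp add: algebra_simps power2_eq_square)
  show ?thesis
    unfolding Omega1 M_def weight_q pw app hyp u c1 c2
    by (rule rearrange) (use rho_pos q_pos q_lt1 stable u_pos in auto)
qed

lemma omega_eq: "omega \<rho> q = (1 - q) * E1 \<rho> q q - \<rho> * K q"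
proof -
  have "0 < weight q" using q_pos rho_pos by (simp add: weight_q)
  moreover have "Psi q = weight q * \<rho> * K q + (1 - q) * (weight q * G q) + M q"
    by (simp add: Psi_def u_def)
  ultimately have "M q / weight q - Psi q / weight q = - \<rho> * K q - (1 - q) * G q"
    by (simp add: field_simps)
  then show ?thesis
    unfolding omega_def distrib_left M_at_q Omega2_at_q E1_eq_G[OF less_imp_le[OF q_pos] q_lt1]
    by simp
qed

lemma q_Z_plus_rho_K:
  "q * Z + \<rho> * K q = (1 - q)^2 * (\<rho> + q) / (\<rho> + q - q^2) * E1 \<rho> q q
                        + q^3 / ((1 - q) * (\<rho> + q - q^2)) - omega \<rho> q"
proof -
  define D where "D = \<rho> + q - q^2"
  define E where "E = E1 \<rho> q q"
  have "q^2 < q" using q_pos q_lt1 by (simp add: power2_eq_square)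
  then have D: "D \<noteq> 0" using rho_pos by (simp add: D_def)
  have q1: "1 - q \<noteq> 0" using q_lt1 by simp
  have "D * Z = q^2 / (1 - q) + \<rho> * (1 - q) * (- E)"
    using Z_eq E1_eq_G[of q] q_pos q_lt1 by (simp add: D_def E_def add.commute)
  then have Z: "Z = (q^2 / (1 - q) + \<rho> * (1 - q) * (- E)) / D"
    using D by (simp add: field_simps)
  have "q * Z + \<rho> * K q = (q^3 / (1 - q) - q * \<rho> * (1 - q) * E + (1 - q) * E * D) / D - omega \<rho> q"
    unfolding omega_eq[folded E_def] Z using D by (simp add: field_simps power3_eq_cube power2_eq_square)
  also have "q^3 / (1 - q) - q * \<rho> * (1 - q) * E + (1 - q) * E * D
               = q^3 / (1 - q) + (1 - q)^2 * (\<rho> + q) * E"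
    by (simp add: D_def algebra_simps power2_eq_square)
  also have "(q^3 / (1 - q) + (1 - q)^2 * (\<rho> + q) * E) / D - omega \<rho> q
               = (1 - q)^2 * (\<rho> + q) / D * E + q^3 / ((1 - q) * D) - omega \<rho> q"
    using D q1 by (simp add: field_simps)
  finally show ?thesis unfolding D_def E_def .
qed

end

theorem mainTheorem2:
  fixes \<rho> q :: real
  assumes "0 < \<rho>" and "0 < q" and "q < 1" and "\<rho> + q < 1"
  shows "mean_sojourn \<rho> q =
           (1 - \<rho> - q) / (q * (q + \<rho>)) *
             ((1 - q)^2 * (\<rho> + q) / (\<rho> + q - q^2) * E1 \<rho> q q
              + q^3 / ((1 - q) * (\<rho> + q - q^2))
              - omega \<rho> q)"
proof -
  interpret batch_ps_queue \<rho> q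
    using assms by unfold_locales
  show ?thesis
    using mean_sojourn_eq q_Z_plus_rho_K by (simp add: u_def algebra_simps)
qed

end
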